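(* Let $\Gamma=(\mathcal{A},\Theta,p,c)$ be a basic game that is a potential game whose potential $\Phi_\theta$ is strictly convex for every $\theta\in\Theta$. Let $\mu$ be a BCWE of $\Gamma$ and $\psi:\mathcal{Y}\times\Theta\to\mathbb{R}$ continuous. Then for every $\varepsilon>0$ there exist $\alpha>0$ and a direct information structure $\mathcal{I}$ such that $(\Gamma,\mathcal{I})$ has a unique Bayesian Wardrop equilibrium outcome, and for every outcome $\tilde\mu$ of a Bayesian Wardrop $\alpha$-equilibrium of $(\Gamma,\mathcal{I})$, $$\Big|\int\psi(y,\theta)\,d\mu(y\mid\theta)-\int\psi(y,\theta)\,d\tilde\mu(y\mid\theta)\Big|\le\varepsilon\quad\text{for all }\theta\in\Theta.$$
   Context: Basic game: $\Gamma=(\mathcal{A},\Theta,p,c)$ with $\mathcal{A}$ a finite set of actions, $\Theta$ a finite set of states, $p\in\Delta(\Theta)$ a full-support prior, and $c=(c_a)_{a\in\mathcal{A}}$ with each $c_a:\mathcal{Y}\times\Theta\to\mathbb{R}$ continuous, where $\mathcal{Y}=\Delta(\mathcal{A})=\{y\in\mathbb{R}^{\mathcal{A}}_{\ge0}:\sum_a y_a=1\}$. For $\gamma>0$, $\Delta_\gamma(\mathcal{A})=\{y\in\mathbb{R}^{\mathcal{A}}_{\ge0}:\sum_a y_a=\gamma\}$. $\Gamma$ is a potential game if for each $\theta$ there is an open set $\widetilde{\mathcal{Y}}\supseteq\mathcal{Y}$ in $\mathbb{R}^{\mathcal{A}}$ and a continuously differentiable $\Phi_\theta:\widetilde{\mathcal{Y}}\to\mathbb{R}$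 with $\partial\Phi_\theta(y)/\partial y_a=c_a(y,\theta)$ for all $a$ and $y\in\mathcal{Y}$. An outcome is a map $\mu:\Theta\to\Delta(\mathcal{Y})$ (Borel probability measures). A BCWE is an outcome $\mu$ such that for all $a,b\in\mathcal{A}$: $\sum_\theta p(\theta)\int y_a c_a(y,\theta)\,d\mu(y\mid\theta)\le\sum_\theta p(\theta)\int y_a c_b(y,\theta)\,d\mu(y\mid\theta)$. Information structure: $\mathcal{I}=(\gamma,\mathcal{T},\pi)$ consisting of a finite set $\mathcal{K}$ of populations with sizes $\gamma^k>0$, $\sum_k\gamma^k=1$; finite type sets $\mathcal{T}^k$, $\mathcal{T}=\prod_k\mathcal{T}^k$; and $\pi:\Theta\to\Delta(\mathcal{T})$. An interim flow profile is $\hat y=(y^k(\tau^k))_{k,\tau^k}$ with $y^k(\tau^k)\in\Delta_{\gamma^k}(\mathcal{A})$; total flow $y(\tau)=\sum_k y^k(\tau^k)$. Let $P(\tau^k)=\sum_\theta\sum_{\tau^{-k}}p(\theta)\pi(\tau^k,\tau^{-k}\mid\theta)$. For $\varepsilon\ge0$, $\hat y$ is a Bayesian Wardrop $\varepsilon$-equilibrium of $(\Gamma,\mathcal{I})$ if for all $k$, all $\tau^k$ with $P(\tau^k)>0$ and all $a,b$ with $y^k_a(\tau^k)>0$: $\sum_\theta\sum_{\tau^{-k}}p(\theta)\pi(\tau^k,\tau^{-k}\mid\theta)c_a(y(\tau),\theta)\le\sum_\theta\sum_{\tau^{-k}}p(\theta)\pi(\tau^k,\tau^{-k}\mid\theta)c_b(y(\tau),\theta)+\varepsilon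 P(\tau^k)$; a Bayesian Wardrop equilibrium is the case $\varepsilon=0$. The outcome of $\hat y$ is $\mu(z\mid\theta)=\sum_{\tau:\,y(\tau)=z}\pi(\tau\mid\theta)$. $\mathcal{I}$ is direct if $\mathcal{T}^k=\mathcal{A}$ for all $k$. *)

theory Defs
  imports "HOL-Analysis.Analysis" "HOL-Probability.Probability"
begin

definition simplex_gamma :: "real \<Rightarrow> (real ^ 'a::finite) set" where
  "simplex_gamma g = {y. (\<forall>a. 0 \<le> y $ a) \<and> (\<Sum>a\<in>UNIV. y $ a) = g}"

abbreviation simplexY :: "(real ^ 'a::finite) set" where
  "simplexY \<equiv> simplex_gamma 1"

definition strictly_convex_on :: "'v::real_vector set \<Rightarrow> ('v \<Rightarrow> real) \<Rightarrow> bool" where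
  "strictly_convex_on S f \<longleftrightarrow>
     (\<forall>x\<in>S. \<forall>y\<in>S. \<forall>u::real. x \<noteq> y \<and> 0 < u \<and> u < 1 \<longrightarrow>
        f (u *\<^sub>R x + (1 - u) *\<^sub>R y) < u * f x + (1 - u) * f y)"

definition basic_game :: "('t::finite \<Rightarrow> real) \<Rightarrow> ('a::finite \<Rightarrow> real ^ 'a \<Rightarrow> 't \<Rightarrow> real) \<Rightarrow> bool" where
  "basic_game p c \<longleftrightarrow> (\<forall>\<theta>. 0 < p \<theta>) \<and> (\<Sum>\<theta>\<in>UNIV. p \<theta>) = 1 \<and>
     (\<forall>a \<theta>. continuous_on simplexY (\<lambda>y. c a y \<theta>))"

definition is_potential :: "('a::finite \<Rightarrow> real ^ 'a \<Rightarrow> 't \<Rightarrow> real) \<Rightarrow> ('t \<Rightarrow> real ^ 'a \<Rightarrow> real) \<Rightarrow> bool" where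
  "is_potential c \<Phi> \<longleftrightarrow> (\<forall>\<theta>. \<exists>U grad. open U \<and> simplexY \<subseteq> U \<and>
      continuous_on U grad \<and>
      (\<forall>y\<in>U. (\<Phi> \<theta> has_derivative (\<lambda>h. grad y \<bullet> h)) (at y)) \<and>
      (\<forall>y\<in>simplexY. \<forall>a. grad y $ a = c a y \<theta>))"

definition is_outcome :: "('t \<Rightarrow> (real ^ 'a::finite) measure) \<Rightarrow> bool" where
  "is_outcome \<mu> \<longleftrightarrow> (\<forall>\<theta>. prob_space (\<mu> \<theta>) \<and> sets (\<mu> \<theta>) = sets (restrict_space borel simplexY))"

definition BCWE :: "('t::finite \<Rightarrow> real) \<Rightarrow> ('a::finite \<Rightarrow> real ^ 'a \<Rightarrow> 't \<Rightarrow> real)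
    \<Rightarrow> ('t \<Rightarrow> (real ^ 'a) measure) \<Rightarrow> bool" where
  "BCWE p c \<mu> \<longleftrightarrow> is_outcome \<mu> \<and>
     (\<forall>a b. (\<Sum>\<theta>\<in>UNIV. p \<theta> * (\<integral>y. y $ a * c a y \<theta> \<partial>\<mu> \<theta>))
          \<le> (\<Sum>\<theta>\<in>UNIV. p \<theta> * (\<integral>y. y $ a * c b y \<theta> \<partial>\<mu> \<theta>)))"

text \<open>Direct information structure: a finite set K of populations (labelled by naturals) with
  sizes gam k > 0 summing to 1; each population's type set is the action set; type profiles are
  the functions in PiE K (\<lambda>_. UNIV); tp \<theta> is a distribution on type profiles.\<close>
definition type_profiles :: "nat set \<Rightarrow> (nat \<Rightarrow> 'a) set" where
  "type_profiles K = PiE K (\<lambda>_. UNIV)"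

definition direct_info :: "nat set \<Rightarrow> (nat \<Rightarrow> real) \<Rightarrow> ('t \<Rightarrow> (nat \<Rightarrow> 'a::finite) pmf) \<Rightarrow> bool" where
  "direct_info K gam tp \<longleftrightarrow> finite K \<and> (\<forall>k\<in>K. 0 < gam k) \<and> (\<Sum>k\<in>K. gam k) = 1 \<and>
     (\<forall>\<theta>. set_pmf (tp \<theta>) \<subseteq> type_profiles K)"

definition interim_profile :: "nat set \<Rightarrow> (nat \<Rightarrow> real) \<Rightarrow> (nat \<Rightarrow> 'a \<Rightarrow> real ^ 'a::finite) \<Rightarrow> bool" where
  "interim_profile K gam yh \<longleftrightarrow> (\<forall>k\<in>K. \<forall>t. yh k t \<in> simplex_gamma (gam k))"

definition total_flow :: "nat set \<Rightarrow> (nat \<Rightarrow> 'a \<Rightarrow> real ^ 'a::finite) \<Rightarrow> (nat \<Rightarrow> 'a) \<Rightarrow> real ^ 'a" where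
  "total_flow K yh \<tau> = (\<Sum>k\<in>K. yh k (\<tau> k))"

definition interim_prob :: "('t::finite \<Rightarrow> real) \<Rightarrow> nat set \<Rightarrow> ('t \<Rightarrow> (nat \<Rightarrow> 'a) pmf) \<Rightarrow> nat \<Rightarrow> 'a \<Rightarrow> real" where
  "interim_prob p K tp k t = (\<Sum>\<theta>\<in>UNIV. \<Sum>\<tau>\<in>{\<tau>\<in>type_profiles K. \<tau> k = t}. p \<theta> * pmf (tp \<theta>) \<tau>)"

definition interim_cost :: "('t::finite \<Rightarrow> real) \<Rightarrow> ('a::finite \<Rightarrow> real ^ 'a \<Rightarrow> 't \<Rightarrow> real) \<Rightarrow> nat set
    \<Rightarrow> ('t \<Rightarrow> (nat \<Rightarrow> 'a) pmf) \<Rightarrow> (nat \<Rightarrow> 'a \<Rightarrow> real ^ 'a) \<Rightarrow> nat \<Rightarrow> 'a \<Rightarrow> 'a \<Rightarrow> real" where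
  "interim_cost p c K tp yh k t a =
     (\<Sum>\<theta>\<in>UNIV. \<Sum>\<tau>\<in>{\<tau>\<in>type_profiles K. \<tau> k = t}. p \<theta> * pmf (tp \<theta>) \<tau> * c a (total_flow K yh \<tau>) \<theta>)"

definition BW_eps_eq :: "('t::finite \<Rightarrow> real) \<Rightarrow> ('a::finite \<Rightarrow> real ^ 'a \<Rightarrow> 't \<Rightarrow> real) \<Rightarrow> nat set
    \<Rightarrow> (nat \<Rightarrow> real) \<Rightarrow> ('t \<Rightarrow> (nat \<Rightarrow> 'a) pmf) \<Rightarrow> real \<Rightarrow> (nat \<Rightarrow> 'a \<Rightarrow> real ^ 'a) \<Rightarrow> bool" where
  "BW_eps_eq p c K gam tp eps yh \<longleftrightarrow> interim_profile K gam yh \<and>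
     (\<forall>k\<in>K. \<forall>t. interim_prob p K tp k t > 0 \<longrightarrow>
        (\<forall>a b. yh k t $ a > 0 \<longrightarrow>
           interim_cost p c K tp yh k t a \<le> interim_cost p c K tp yh k t b + eps * interim_prob p K tp k t))"

definition BW_outcome :: "nat set \<Rightarrow> ('t \<Rightarrow> (nat \<Rightarrow> 'a) pmf) \<Rightarrow> (nat \<Rightarrow> 'a \<Rightarrow> real ^ 'a::finite)
    \<Rightarrow> 't \<Rightarrow> (real ^ 'a) pmf" where
  "BW_outcome K tp yh \<theta> = map_pmf (total_flow K yh) (tp \<theta>)"

end

theory Submission
  imports Defs
begin

text \<open>The costs are the gradient of the strictly convex potentials, so they are strictly
  monotone: the gap (y - y') . (c y - c y') is positive off the diagonal and, by compactness,
  bounded below on pairs at distance at least eta. Summed over states and type profiles, this gap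
  between an interim profile and an exact equilibrium is dominated by the total regret of the
  profile. Hence exact equilibria have a unique outcome, and every profile of small regret, in
  particular every alpha-equilibrium, has an outcome close to the equilibrium one, with alpha
  independent of the information structure. Exact equilibria exist as minimisers of the expected
  potential.

  To implement the BCWE, its outcome is rounded to the grid of mesh 1/n and realised by n
  populations of mass 1/n whose types are rotations of a listing with the prescribed counts. The
  obedient profile, in which everybody plays their type, then has outcome close to the BCWE, and
  its regret approximates the slack in the BCWE inequalities, so it is small. Its distance to the
  equilibrium outcome is controlled as above.\<close>

section \<open>Simplices and strictly convex potentials\<close>

lemma convex_simplex_gamma: "convex (simplex_gamma g :: (real ^ 'a::finite) set)"
  unfolding convex_def simplex_gamma_def
  by (auto simp: sum.distrib sum_distrib_left[symmetric]) (metis distrib_right mult_1)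

lemma compact_simplex_gamma: "compact (simplex_gamma g :: (real ^ 'a::finite) set)"
proof -
  have "simplex_gamma g = {y::real ^ 'a. \<forall>a. 0 \<le> y $ a} \<inter> {y. (\<Sum>a\<in>UNIV. y $ a) = g}"
    unfolding simplex_gamma_def by auto
  moreover have "closed {y::real ^ 'a. \<forall>a. 0 \<le> y $ a}" "closed {y::real ^ 'a. (\<Sum>a\<in>UNIV. y $ a) = g}"
    by (intro closed_Collect_all closed_Collect_le closed_Collect_eq continuous_intros)+
  moreover have "norm y \<le> \<bar>g\<bar>" if "y \<in> simplex_gamma g" for y :: "real ^ 'a"
    using norm_le_l1_cart[of y] that unfolding simplex_gamma_def by simp
  then have "bounded (simplex_gamma g :: (real ^ 'a) set)"
    unfolding bounded_iff by blast
  ultimately show ?thesis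
    unfolding compact_eq_bounded_closed by auto
qed

lemma simplex_gamma_sum_mult_const:
  assumes "y \<in> simplex_gamma g"
  shows "(\<Sum>a\<in>UNIV. y $ a * r) = g * r"
  using assms unfolding simplex_gamma_def by (simp add: sum_distrib_right[symmetric])

lemma simplex_gamma_sum_mult_ge_Min:
  fixes f :: "'a::finite \<Rightarrow> real"
  assumes "y \<in> simplex_gamma g"
  shows "g * Min (range f) \<le> (\<Sum>a\<in>UNIV. y $ a * f a)"
proof -
  have "g * Min (range f) = (\<Sum>a\<in>UNIV. y $ a * Min (range f))"
    using simplex_gamma_sum_mult_const[OF assms] by simp
  also have "\<dots> \<le> (\<Sum>a\<in>UNIV. y $ a * f a)"
    using assms unfolding simplex_gamma_def by (intro sum_mono mult_left_mono) auto
  finally show ?thesis .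
qed

lemma has_real_derivative_along_line:
  assumes "(f has_derivative (\<lambda>h. g \<bullet> h)) (at x)"
  shows "((\<lambda>s. f (x + s *\<^sub>R v)) has_real_derivative g \<bullet> v) (at 0)"
proof -
  have "((\<lambda>s::real. x + s *\<^sub>R v) has_derivative (\<lambda>s. s *\<^sub>R v)) (at 0)"
    by (auto intro!: derivative_eq_intros)
  moreover have "(f has_derivative (\<lambda>h. g \<bullet> h)) (at (x + (0::real) *\<^sub>R v))"
    using assms by simp
  ultimately have "((\<lambda>s. f (x + s *\<^sub>R v)) has_derivative (\<lambda>s. g \<bullet> (s *\<^sub>R v))) (at 0)"
    by (rule has_derivative_compose)
  moreover have "(\<lambda>s. g \<bullet> (s *\<^sub>R v)) = (*) (g \<bullet> v)"
    by (auto simp: fun_eq_iff)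
  ultimately show ?thesis
    by (simp add: has_field_derivative_def)
qed

text \<open>The difference quotients of f along the segment from x to y are bounded by twice the
  gain at the midpoint, which strict convexity makes strictly smaller than f y - f x.\<close>
lemma strictly_convex_on_gradient_less:
  fixes f :: "'v::real_inner \<Rightarrow> real"
  assumes S: "convex S" and sc: "strictly_convex_on S f" and x: "x \<in> S" and y: "y \<in> S"
    and xy: "x \<noteq> y" and der: "(f has_derivative (\<lambda>h. g \<bullet> h)) (at x)"
  shows "g \<bullet> (y - x) < f y - f x"
proof -
  define m where "m = (1/2::real) *\<^sub>R y + (1 - 1/2) *\<^sub>R x"
  have mS: "m \<in> S" using S x y unfolding m_def by (simp add: convex_def)
  have "y = 2 *\<^sub>R m - x"
    unfolding m_def by (simp add: algebra_simps)
  then have mx: "m \<noteq> x"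
    using xy by (auto simp: scaleR_2)
  have fm: "f m < 1/2 * f y + (1 - 1/2) * f x"
    unfolding m_def by (rule sc[unfolded strictly_convex_on_def, rule_format]) (use x y xy in auto)
  have quot: "(f (x + u *\<^sub>R (y - x)) - f x) / u \<le> 2 * (f m - f x)" if u: "0 < u" "u \<le> 1/2" for u
  proof -
    have seg: "x + u *\<^sub>R (y - x) = (2*u) *\<^sub>R m + (1 - 2*u) *\<^sub>R x"
      unfolding m_def by (simp add: algebra_simps flip: scaleR_2)
    have "f (x + u *\<^sub>R (y - x)) \<le> (2*u) * f m + (1 - 2*u) * f x"
    proof (cases "u = 1/2")
      case False
      with u have "2*u < 1" by simp
      then show ?thesis
        using sc mS x mx u unfolding seg strictly_convex_on_def
        by (metis less_eq_real_def mult_pos_pos zero_less_numeral)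
    next
      case True
      then have "2*u = 1" by simp
      then show ?thesis by (simp add: seg)
    qed
    then have "f (x + u *\<^sub>R (y - x)) - f x \<le> u * (2 * (f m - f x))"
      by (simp add: algebra_simps)
    then show ?thesis
      using u by (simp add: divide_le_eq mult.commute)
  qed
  have "((\<lambda>u. (f (x + u *\<^sub>R (y - x)) - f x) / u) \<longlongrightarrow> g \<bullet> (y - x)) (at_right 0)"
    using has_field_derivative_at_within[OF has_real_derivative_along_line[OF der]]
    by (simp add: has_field_derivative_iff)
  moreover have "eventually (\<lambda>u. (f (x + u *\<^sub>R (y - x)) - f x) / u \<le> 2 * (f m - f x)) (at_right 0)"
    unfolding eventually_at_right_field using quot by (intro exI[of _ "1/2"]) force
  ultimately have "g \<bullet> (y - x) \<le> 2 * (f m - f x)"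
    by (rule tendsto_upperbound) simp
  then show ?thesis using fm by simp
qed

lemma potential_gradient:
  assumes "is_potential c \<Phi>"
  obtains grad where "\<And>\<theta> y. y \<in> simplexY \<Longrightarrow> (\<Phi> \<theta> has_derivative (\<lambda>h. grad \<theta> y \<bullet> h)) (at y)"
    and "\<And>\<theta> y a. y \<in> simplexY \<Longrightarrow> grad \<theta> y $ a = c a y \<theta>"
proof -
  have "\<forall>\<theta>. \<exists>G. (\<forall>y\<in>simplexY. (\<Phi> \<theta> has_derivative (\<lambda>h. G y \<bullet> h)) (at y)) \<and>
      (\<forall>y\<in>simplexY. \<forall>a. G y $ a = c a y \<theta>)"
    using assms unfolding is_potential_def by blast
  then obtain grad where "\<forall>\<theta>. (\<forall>y\<in>simplexY. (\<Phi> \<theta> has_derivative (\<lambda>h. grad \<theta> y \<bullet> h)) (at y)) \<and>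
      (\<forall>y\<in>simplexY. \<forall>a. grad \<theta> y $ a = c a y \<theta>)"
    by metis
  then show ?thesis
    using that by blast
qed

lemma continuous_on_potential:
  assumes "is_potential c \<Phi>"
  shows "continuous_on simplexY (\<Phi> \<theta>)"
proof -
  obtain grad where grad: "\<And>\<theta> y. y \<in> simplexY \<Longrightarrow> (\<Phi> \<theta> has_derivative (\<lambda>h. grad \<theta> y \<bullet> h)) (at y)"
    using potential_gradient[OF assms] by metis
  show ?thesis
    by (rule has_derivative_continuous_on[of _ _ "\<lambda>y h. grad \<theta> y \<bullet> h"])
      (use grad has_derivative_at_withinI in blast)
qed

definition cost_gap :: "('a::finite \<Rightarrow> real ^ 'a \<Rightarrow> 't \<Rightarrow> real) \<Rightarrow> 't \<Rightarrow> real ^ 'a \<Rightarrow> real ^ 'a \<Rightarrow> real" where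
  "cost_gap c \<theta> y y' = (\<Sum>a\<in>UNIV. (y $ a - y' $ a) * (c a y \<theta> - c a y' \<theta>))"

text \<open>The costs are the gradient of a strictly convex potential, hence strictly monotone.\<close>
lemma cost_gap_pos:
  assumes pot: "is_potential c \<Phi>" and sc: "strictly_convex_on simplexY (\<Phi> \<theta>)"
    and y: "y \<in> simplexY" and y': "y' \<in> simplexY" and ne: "y \<noteq> y'"
  shows "0 < cost_gap c \<theta> y y'"
proof -
  obtain grad where der: "\<And>y. y \<in> simplexY \<Longrightarrow> (\<Phi> \<theta> has_derivative (\<lambda>h. grad \<theta> y \<bullet> h)) (at y)"
    and grad: "\<And>y a. y \<in> simplexY \<Longrightarrow> grad \<theta> y $ a = c a y \<theta>"
    using potential_gradient[OF pot] by metis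
  have "grad \<theta> y' \<bullet> (y - y') < \<Phi> \<theta> y - \<Phi> \<theta> y'"
    by (rule strictly_convex_on_gradient_less[OF convex_simplex_gamma sc y' y]) (use ne der y' in auto)
  moreover have "grad \<theta> y \<bullet> (y' - y) < \<Phi> \<theta> y' - \<Phi> \<theta> y"
    by (rule strictly_convex_on_gradient_less[OF convex_simplex_gamma sc y y']) (use ne der y in auto)
  moreover have "cost_gap c \<theta> y y' = grad \<theta> y \<bullet> (y - y') - grad \<theta> y' \<bullet> (y - y')"
  proof -
    have "cost_gap c \<theta> y y' = (grad \<theta> y - grad \<theta> y') \<bullet> (y - y')"
      unfolding cost_gap_def inner_vec_def using grad y y' by (auto simp: algebra_simps intro!: sum.cong)
    then show ?thesis
      by (simp add: inner_diff_left)
  qed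
  moreover have "grad \<theta> y \<bullet> (y - y') = - (grad \<theta> y \<bullet> (y' - y))"
    by (simp add: inner_diff_right)
  ultimately show ?thesis by linarith
qed

lemma cost_gap_nonneg:
  assumes "is_potential c \<Phi>" and "strictly_convex_on simplexY (\<Phi> \<theta>)"
    and "y \<in> simplexY" and "y' \<in> simplexY"
  shows "0 \<le> cost_gap c \<theta> y y'"
  using cost_gap_pos[OF assms] by (cases "y = y'") (auto simp: cost_gap_def)

lemma Min_range_pos:
  fixes d :: "'i::finite \<Rightarrow> 'b::linorder"
  assumes "\<And>i. x < d i"
  shows "x < Min (range d)"
  using assms by (subst Min_gr_iff) auto

text \<open>On the compact set of pairs at distance at least eta, the continuous and positive
  monotonicity gap attains a positive minimum.\<close>
lemma cost_gap_margin:
  fixes c :: "'a::finite \<Rightarrow> real ^ 'a \<Rightarrow> 't \<Rightarrow> real"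
  assumes cont: "\<And>a. continuous_on simplexY (\<lambda>y. c a y \<theta>)" and pot: "is_potential c \<Phi>"
    and sc: "strictly_convex_on simplexY (\<Phi> \<theta>)" and \<eta>: "0 < \<eta>"
  shows "\<exists>\<kappa>>0. \<forall>y\<in>simplexY. \<forall>y'\<in>simplexY. \<eta> \<le> dist y y' \<longrightarrow> \<kappa> \<le> cost_gap c \<theta> y y'"
proof -
  define S where "S = {z \<in> (simplexY :: (real ^ 'a) set) \<times> simplexY. \<eta> \<le> dist (fst z) (snd z)}"
  have "compact S"
  proof -
    have "S = (simplexY \<times> simplexY) \<inter> {z. \<eta> \<le> dist (fst z) (snd z)}"
      unfolding S_def by auto
    moreover have "closed {z::(real ^ 'a) \<times> (real ^ 'a). \<eta> \<le> dist (fst z) (snd z)}"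
      by (intro closed_Collect_le continuous_intros)
    ultimately show ?thesis
      by (simp add: compact_Int_closed compact_Times compact_simplex_gamma)
  qed
  have cost: "continuous_on S (\<lambda>z. c a (f z) \<theta>)"
    if "continuous_on S f" "f ` S \<subseteq> simplexY" for a f
    by (rule continuous_on_compose2[of simplexY "\<lambda>y. c a y \<theta>"]) (use cont that in auto)
  have "continuous_on S (\<lambda>z. cost_gap c \<theta> (fst z) (snd z))"
    unfolding cost_gap_def by (intro continuous_intros cost) (auto simp: S_def)
  show ?thesis
  proof (cases "S = {}")
    case True
    then show ?thesis unfolding S_def by (intro exI[of _ 1]) auto
  next
    case False
    with continuous_attains_inf[OF \<open>compact S\<close> False \<open>continuous_on S _\<close>]
    obtain z where z: "z \<in> S"
      and min: "\<forall>w\<in>S. cost_gap c \<theta> (fst z) (snd z) \<le> cost_gap c \<theta> (fst w) (snd w)"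
      by blast
    have "0 < cost_gap c \<theta> (fst z) (snd z)"
      using z \<eta> unfolding S_def by (intro cost_gap_pos[OF pot sc]) auto
    with min show ?thesis
      unfolding S_def by (intro exI[of _ "cost_gap c \<theta> (fst z) (snd z)"]) auto
  qed
qed

lemma cost_gap_uniform_margin:
  fixes c :: "'a::finite \<Rightarrow> real ^ 'a \<Rightarrow> 't::finite \<Rightarrow> real"
  assumes game: "basic_game p c" and pot: "is_potential c \<Phi>"
    and sc: "\<forall>\<theta>. strictly_convex_on simplexY (\<Phi> \<theta>)" and \<eta>: "0 < \<eta>"
  shows "\<exists>\<kappa>>0. \<forall>\<theta>. \<forall>y\<in>simplexY. \<forall>y'\<in>simplexY. \<eta> \<le> dist y y' \<longrightarrow> \<kappa> \<le> cost_gap c \<theta> y y'"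
proof -
  have "\<exists>\<kappa>>0. \<forall>y\<in>simplexY. \<forall>y'\<in>simplexY. \<eta> \<le> dist y y' \<longrightarrow> \<kappa> \<le> cost_gap c \<theta> y y'" for \<theta>
    using game sc \<eta> unfolding basic_game_def by (intro cost_gap_margin[OF _ pot]) auto
  then obtain \<kappa> where \<kappa>: "\<forall>\<theta>. 0 < \<kappa> \<theta> \<and>
      (\<forall>y\<in>simplexY. \<forall>y'\<in>simplexY. \<eta> \<le> dist y y' \<longrightarrow> \<kappa> \<theta> \<le> cost_gap c \<theta> y y')"
    by (metis choice)
  show ?thesis
  proof (intro exI[of _ "Min (range \<kappa>)"] conjI allI ballI impI)
    show "0 < Min (range \<kappa>)"
      using \<kappa> by (intro Min_range_pos) blast
    fix \<theta> and y y' :: "real ^ 'a"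
    assume "y \<in> simplexY" "y' \<in> simplexY" "\<eta> \<le> dist y y'"
    with \<kappa> have "\<kappa> \<theta> \<le> cost_gap c \<theta> y y'"
      by blast
    moreover have "Min (range \<kappa>) \<le> \<kappa> \<theta>"
      by (rule Min_le) auto
    ultimately show "Min (range \<kappa>) \<le> cost_gap c \<theta> y y'"
      by linarith
  qed
qed

lemma uniformly_continuous_family_finite:
  fixes F :: "'i::finite \<Rightarrow> 'v::metric_space \<Rightarrow> real"
  assumes S: "compact S" and cont: "\<And>i. continuous_on S (F i)" and \<zeta>: "0 < \<zeta>"
  shows "\<exists>\<delta>>0. \<forall>i. \<forall>y\<in>S. \<forall>y'\<in>S. dist y y' < \<delta> \<longrightarrow> \<bar>F i y - F i y'\<bar> \<le> \<zeta>"
proof -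
  have "\<exists>\<delta>>0. \<forall>y\<in>S. \<forall>y'\<in>S. dist y' y < \<delta> \<longrightarrow> dist (F i y') (F i y) < \<zeta>" for i
    using uniformly_continuous_onE[OF compact_uniformly_continuous[OF cont S] \<zeta>] by metis
  then obtain \<delta> where \<delta>: "\<And>i. 0 < \<delta> i"
    and close: "\<And>i y y'. y \<in> S \<Longrightarrow> y' \<in> S \<Longrightarrow> dist y' y < \<delta> i \<Longrightarrow> dist (F i y') (F i y) < \<zeta>"
    by metis
  show ?thesis
  proof (intro exI[of _ "Min (range \<delta>)"] conjI allI ballI impI)
    show "0 < Min (range \<delta>)"
      by (rule Min_range_pos) (rule \<delta>)
    fix i y y' assume "y \<in> S" "y' \<in> S" "dist y y' < Min (range \<delta>)"
    moreover have "Min (range \<delta>) \<le> \<delta> i" by (rule Min_le) auto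
    ultimately have "dist (F i y) (F i y') < \<zeta>"
      using close[of y' y i] by (simp add: dist_commute)
    then show "\<bar>F i y - F i y'\<bar> \<le> \<zeta>"
      by (simp add: dist_real_def)
  qed
qed

section \<open>Regret and the monotonicity of costs\<close>

lemma finite_type_profiles: "finite K \<Longrightarrow> finite (type_profiles K :: (nat \<Rightarrow> 'a::finite) set)"
  unfolding type_profiles_def by (rule finite_PiE) auto

lemma sum_over_fibres:
  assumes "finite S"
  shows "(\<Sum>t\<in>(UNIV::'a::finite set). \<Sum>\<tau>\<in>{\<tau>\<in>S. \<tau> k = t}. F t \<tau>) = (\<Sum>\<tau>\<in>S. F (\<tau> k) \<tau>)"
proof -
  have "(\<Sum>t\<in>(UNIV::'a set). \<Sum>\<tau>\<in>{\<tau>\<in>S. \<tau> k = t}. F t \<tau>)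
      = (\<Sum>t\<in>(UNIV::'a set). \<Sum>\<tau>\<in>S. if \<tau> k = t then F t \<tau> else 0)"
    using assms by (simp add: sum.inter_filter)
  also have "\<dots> = (\<Sum>\<tau>\<in>S. \<Sum>t\<in>(UNIV::'a set). if \<tau> k = t then F t \<tau> else 0)"
    by (rule sum.swap)
  also have "\<dots> = (\<Sum>\<tau>\<in>S. F (\<tau> k) \<tau>)"
    by (simp add: sum.delta)
  finally show ?thesis .
qed

lemma total_flow_component: "total_flow K yh \<tau> $ a = (\<Sum>k\<in>K. yh k (\<tau> k) $ a)"
  unfolding total_flow_def by (simp add: sum_component)

lemma total_flow_in_simplex:
  assumes "direct_info K gam tp" and "interim_profile K gam yh"
  shows "total_flow K yh \<tau> \<in> simplexY"
proof -
  have "0 \<le> total_flow K yh \<tau> $ a" for a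
    using assms unfolding total_flow_component interim_profile_def simplex_gamma_def
    by (auto intro!: sum_nonneg)
  moreover have "(\<Sum>a\<in>UNIV. total_flow K yh \<tau> $ a) = (\<Sum>k\<in>K. \<Sum>a\<in>UNIV. yh k (\<tau> k) $ a)"
    unfolding total_flow_component by (rule sum.swap)
  moreover have "\<dots> = (\<Sum>k\<in>K. gam k)"
    using assms(2) unfolding interim_profile_def simplex_gamma_def by (intro sum.cong) auto
  ultimately show ?thesis
    using assms(1) unfolding simplex_gamma_def direct_info_def by auto
qed

lemma interim_prob_nonneg:
  assumes "basic_game p c"
  shows "0 \<le> interim_prob p K tp k t"
  using assms unfolding interim_prob_def basic_game_def
  by (intro sum_nonneg mult_nonneg_nonneg) (auto simp: less_imp_le)

lemma interim_cost_eq_0_if_interim_prob_eq_0: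
  fixes c :: "'a::finite \<Rightarrow> real ^ 'a \<Rightarrow> 't::finite \<Rightarrow> real"
  assumes game: "basic_game p c" and K: "finite K" and P: "interim_prob p K tp k t = 0"
  shows "interim_cost p c K tp yh k t a = 0"
proof -
  have fin: "finite {\<tau>\<in>type_profiles K. \<tau> k = t}"
    using finite_type_profiles[OF K] by auto
  have nn: "0 \<le> p \<theta> * pmf (tp \<theta>) \<tau>" for \<theta> \<tau>
    using game unfolding basic_game_def by (auto simp: less_imp_le)
  have "(\<Sum>\<tau>\<in>{\<tau>\<in>type_profiles K. \<tau> k = t}. p \<theta> * pmf (tp \<theta>) \<tau>) = 0" for \<theta>
    using P unfolding interim_prob_def
    by (subst (asm) sum_nonneg_eq_0_iff) (auto intro!: sum_nonneg simp: nn)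
  then have "p \<theta> * pmf (tp \<theta>) \<tau> = 0" if "\<tau> \<in> type_profiles K" "\<tau> k = t" for \<theta> \<tau>
    using fin that by (subst (asm) sum_nonneg_eq_0_iff) (auto simp: nn)
  then show ?thesis
    unfolding interim_cost_def by (auto intro!: sum.neutral)
qed

lemma sum_interim_prob:
  fixes c :: "'a::finite \<Rightarrow> real ^ 'a \<Rightarrow> 't::finite \<Rightarrow> real" and tp :: "'t \<Rightarrow> (nat \<Rightarrow> 'a) pmf"
  assumes game: "basic_game p c" and info: "direct_info K gam tp"
  shows "(\<Sum>t\<in>UNIV. interim_prob p K tp k t) = 1"
proof -
  have K: "finite K"
    using info unfolding direct_info_def by auto
  have "(\<Sum>t\<in>UNIV. interim_prob p K tp k t)
      = (\<Sum>\<theta>\<in>UNIV. \<Sum>t\<in>UNIV. \<Sum>\<tau>\<in>{\<tau>\<in>type_profiles K. \<tau> k = t}. p \<theta> * pmf (tp \<theta>) \<tau>)"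
    unfolding interim_prob_def by (rule sum.swap)
  also have "\<dots> = (\<Sum>\<theta>\<in>UNIV. \<Sum>\<tau>\<in>type_profiles K. p \<theta> * pmf (tp \<theta>) \<tau>)"
    by (simp add: sum_over_fibres[OF finite_type_profiles[OF K]])
  also have "\<dots> = (\<Sum>\<theta>\<in>UNIV. p \<theta>)"
  proof (rule sum.cong[OF refl])
    fix \<theta>
    have "sum (pmf (tp \<theta>)) (type_profiles K) = 1"
      using info finite_type_profiles[OF K] unfolding direct_info_def by (intro sum_pmf_eq_1) auto
    then show "(\<Sum>\<tau>\<in>type_profiles K. p \<theta> * pmf (tp \<theta>) \<tau>) = p \<theta>"
      by (simp add: sum_distrib_left[symmetric])
  qed
  also have "\<dots> = 1"
    using game unfolding basic_game_def by simp
  finally show ?thesis .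
qed

lemma expectation_BW_outcome:
  fixes tp :: "'t \<Rightarrow> (nat \<Rightarrow> 'a::finite) pmf" and f :: "real ^ 'a \<Rightarrow> real"
  assumes info: "direct_info K gam tp"
  shows "measure_pmf.expectation (BW_outcome K tp yh \<theta>) f
       = (\<Sum>\<tau>\<in>type_profiles K. pmf (tp \<theta>) \<tau> * f (total_flow K yh \<tau>))"
proof -
  have K: "finite K"
    using info unfolding direct_info_def by auto
  have "measure_pmf.expectation (BW_outcome K tp yh \<theta>) f
      = measure_pmf.expectation (tp \<theta>) (\<lambda>\<tau>. f (total_flow K yh \<tau>))"
    unfolding BW_outcome_def by simp
  also have "\<dots> = (\<Sum>\<tau>\<in>type_profiles K. pmf (tp \<theta>) \<tau> *\<^sub>R f (total_flow K yh \<tau>))"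
    by (rule integral_measure_pmf[OF finite_type_profiles[OF K]]) (use info in \<open>auto simp: direct_info_def\<close>)
  finally show ?thesis by simp
qed

text \<open>The total expected regret: for every population and type, the expected cost of the
  prescribed mixture minus that of a best reply, both unnormalised by the type probability.\<close>
definition regret :: "('t::finite \<Rightarrow> real) \<Rightarrow> ('a::finite \<Rightarrow> real ^ 'a \<Rightarrow> 't \<Rightarrow> real) \<Rightarrow> nat set
    \<Rightarrow> (nat \<Rightarrow> real) \<Rightarrow> ('t \<Rightarrow> (nat \<Rightarrow> 'a) pmf) \<Rightarrow> (nat \<Rightarrow> 'a \<Rightarrow> real ^ 'a) \<Rightarrow> real" where
  "regret p c K gam tp yh = (\<Sum>k\<in>K. \<Sum>t\<in>UNIV. (\<Sum>a\<in>UNIV. yh k t $ a * interim_cost p c K tp yh k t a)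
      - gam k * Min (range (interim_cost p c K tp yh k t)))"

lemma BW_eps_eq_regret_term_le:
  fixes c :: "'a::finite \<Rightarrow> real ^ 'a \<Rightarrow> 't::finite \<Rightarrow> real"
  assumes game: "basic_game p c" and K: "finite K" and eq: "BW_eps_eq p c K gam tp \<epsilon> yh"
    and k: "k \<in> K"
  shows "(\<Sum>a\<in>UNIV. yh k t $ a * interim_cost p c K tp yh k t a)
      - gam k * Min (range (interim_cost p c K tp yh k t)) \<le> gam k * (\<epsilon> * interim_prob p K tp k t)"
proof (cases "interim_prob p K tp k t = 0")
  case True
  then show ?thesis
    using interim_cost_eq_0_if_interim_prob_eq_0[OF game K True] by simp
next
  case False
  then have P: "0 < interim_prob p K tp k t"
    using interim_prob_nonneg[OF game, of K tp k t] by linarith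
  have yh: "yh k t \<in> simplex_gamma (gam k)"
    using eq k unfolding BW_eps_eq_def interim_profile_def by auto
  define m where "m = Min (range (interim_cost p c K tp yh k t))"
  have "m \<in> range (interim_cost p c K tp yh k t)"
    unfolding m_def by (rule Min_in) auto
  then obtain b where b: "interim_cost p c K tp yh k t b = m"
    by (metis imageE)
  have "yh k t $ a * interim_cost p c K tp yh k t a \<le> yh k t $ a * (m + \<epsilon> * interim_prob p K tp k t)" for a
  proof (cases "0 < yh k t $ a")
    case True
    then have "interim_cost p c K tp yh k t a \<le> m + \<epsilon> * interim_prob p K tp k t"
      using eq k P b unfolding BW_eps_eq_def by metis
    then show ?thesis using True by (simp add: mult_left_mono)
  next
    case False
    then have "yh k t $ a = 0"
      using yh unfolding simplex_gamma_def by (metis (mono_tags) mem_Collect_eq less_eq_real_def)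
    then show ?thesis by simp
  qed
  then have "(\<Sum>a\<in>UNIV. yh k t $ a * interim_cost p c K tp yh k t a)
      \<le> (\<Sum>a\<in>UNIV. yh k t $ a * (m + \<epsilon> * interim_prob p K tp k t))"
    by (rule sum_mono)
  also have "\<dots> = gam k * (m + \<epsilon> * interim_prob p K tp k t)"
    using yh by (rule simplex_gamma_sum_mult_const)
  finally show ?thesis
    unfolding m_def by (simp add: algebra_simps)
qed

lemma regret_le_if_BW_eps_eq:
  fixes c :: "'a::finite \<Rightarrow> real ^ 'a \<Rightarrow> 't::finite \<Rightarrow> real" and tp :: "'t \<Rightarrow> (nat \<Rightarrow> 'a) pmf"
  assumes game: "basic_game p c" and info: "direct_info K gam tp" and eq: "BW_eps_eq p c K gam tp \<epsilon> yh"
  shows "regret p c K gam tp yh \<le> \<epsilon>"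
proof -
  have K: "finite K"
    using info unfolding direct_info_def by auto
  have "regret p c K gam tp yh \<le> (\<Sum>k\<in>K. \<Sum>t\<in>UNIV. gam k * (\<epsilon> * interim_prob p K tp k t))"
    unfolding regret_def by (intro sum_mono BW_eps_eq_regret_term_le[OF game K eq])
  also have "\<dots> = (\<Sum>k\<in>K. gam k * \<epsilon> * (\<Sum>t\<in>UNIV. interim_prob p K tp k t))"
    by (simp add: sum_distrib_left mult.assoc)
  also have "\<dots> = \<epsilon>"
    using sum_interim_prob[OF game info] info unfolding direct_info_def
    by (simp add: sum_distrib_right[symmetric])
  finally show ?thesis .
qed

lemma BW_eq_support_cost:
  fixes c :: "'a::finite \<Rightarrow> real ^ 'a \<Rightarrow> 't::finite \<Rightarrow> real"
  assumes game: "basic_game p c" and K: "finite K" and eq: "BW_eps_eq p c K gam tp 0 ys"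
    and k: "k \<in> K"
  shows "(\<Sum>a\<in>UNIV. ys k t $ a * interim_cost p c K tp ys k t a)
      = gam k * Min (range (interim_cost p c K tp ys k t))"
proof -
  have "ys k t \<in> simplex_gamma (gam k)"
    using eq k unfolding BW_eps_eq_def interim_profile_def by auto
  then show ?thesis
    using BW_eps_eq_regret_term_le[OF game K eq k, of t]
      simplex_gamma_sum_mult_ge_Min[of "ys k t" "gam k" "interim_cost p c K tp ys k t"]
    by simp
qed

definition expected_cost_gap :: "('a::finite \<Rightarrow> real ^ 'a \<Rightarrow> 't \<Rightarrow> real) \<Rightarrow> nat set \<Rightarrow> ('t \<Rightarrow> (nat \<Rightarrow> 'a) pmf)
    \<Rightarrow> (nat \<Rightarrow> 'a \<Rightarrow> real ^ 'a) \<Rightarrow> (nat \<Rightarrow> 'a \<Rightarrow> real ^ 'a) \<Rightarrow> 't \<Rightarrow> real" where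
  "expected_cost_gap c K tp yh ys \<theta> =
     (\<Sum>\<tau>\<in>type_profiles K. pmf (tp \<theta>) \<tau> * cost_gap c \<theta> (total_flow K yh \<tau>) (total_flow K ys \<tau>))"

lemma expected_cost_gap_nonneg:
  assumes pot: "is_potential c \<Phi>" and sc: "strictly_convex_on simplexY (\<Phi> \<theta>)"
    and info: "direct_info K gam tp" and yh: "interim_profile K gam yh" and ys: "interim_profile K gam ys"
  shows "0 \<le> expected_cost_gap c K tp yh ys \<theta>"
  unfolding expected_cost_gap_def
  by (intro sum_nonneg mult_nonneg_nonneg pmf_nonneg cost_gap_nonneg[OF pot sc]
      total_flow_in_simplex[OF info] yh ys)

text \<open>Summation by parts: the expected monotonicity gap of two profiles is the pairing of their
  interim flow differences with their interim cost differences.\<close>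
lemma sum_expected_cost_gap_eq:
  fixes c :: "'a::finite \<Rightarrow> real ^ 'a \<Rightarrow> 't::finite \<Rightarrow> real" and tp :: "'t \<Rightarrow> (nat \<Rightarrow> 'a) pmf"
  assumes K: "finite K"
  shows "(\<Sum>\<theta>\<in>UNIV. p \<theta> * expected_cost_gap c K tp yh ys \<theta>)
    = (\<Sum>k\<in>K. \<Sum>t\<in>UNIV. \<Sum>a\<in>UNIV. (yh k t $ a - ys k t $ a) *
         (interim_cost p c K tp yh k t a - interim_cost p c K tp ys k t a))"
proof -
  define TP where "TP = (type_profiles K :: (nat \<Rightarrow> 'a) set)"
  have TP: "finite TP"
    unfolding TP_def using K by (rule finite_type_profiles)
  define D where "D \<theta> \<tau> a = c a (total_flow K yh \<tau>) \<theta> - c a (total_flow K ys \<tau>) \<theta>" for \<theta> \<tau> a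
  define W where "W \<theta> \<tau> = p \<theta> * pmf (tp \<theta>) \<tau>" for \<theta> \<tau>
  define d where "d k t a = yh k t $ a - ys k t $ a" for k t a
  have IC: "interim_cost p c K tp yh k t a - interim_cost p c K tp ys k t a
      = (\<Sum>\<theta>\<in>UNIV. \<Sum>\<tau>\<in>{\<tau>\<in>TP. \<tau> k = t}. W \<theta> \<tau> * D \<theta> \<tau> a)" for k t a
    unfolding interim_cost_def TP_def W_def D_def
    by (simp add: sum_subtractf[symmetric] algebra_simps)
  have "(\<Sum>\<theta>\<in>UNIV. p \<theta> * expected_cost_gap c K tp yh ys \<theta>)
      = (\<Sum>\<theta>\<in>UNIV. \<Sum>\<tau>\<in>TP. \<Sum>a\<in>UNIV. \<Sum>k\<in>K. d k (\<tau> k) a * (W \<theta> \<tau> * D \<theta> \<tau> a))"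
    unfolding expected_cost_gap_def TP_def[symmetric] cost_gap_def total_flow_component d_def W_def D_def
    by (simp add: sum_distrib_left sum_distrib_right sum_subtractf[symmetric] algebra_simps)
  also have "\<dots> = (\<Sum>\<theta>\<in>UNIV. \<Sum>\<tau>\<in>TP. \<Sum>k\<in>K. \<Sum>a\<in>UNIV. d k (\<tau> k) a * (W \<theta> \<tau> * D \<theta> \<tau> a))"
    by (rule sum.cong[OF refl], rule sum.cong[OF refl], rule sum.swap)
  also have "\<dots> = (\<Sum>\<theta>\<in>UNIV. \<Sum>k\<in>K. \<Sum>\<tau>\<in>TP. \<Sum>a\<in>UNIV. d k (\<tau> k) a * (W \<theta> \<tau> * D \<theta> \<tau> a))"
    by (rule sum.cong[OF refl], rule sum.swap)
  also have "\<dots> = (\<Sum>k\<in>K. \<Sum>\<theta>\<in>UNIV. \<Sum>\<tau>\<in>TP. \<Sum>a\<in>UNIV. d k (\<tau> k) a * (W \<theta> \<tau> * D \<theta> \<tau> a))"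
    by (rule sum.swap)
  also have "\<dots> = (\<Sum>k\<in>K. \<Sum>\<theta>\<in>UNIV. \<Sum>t\<in>UNIV. \<Sum>\<tau>\<in>{\<tau>\<in>TP. \<tau> k = t}. \<Sum>a\<in>UNIV. d k t a * (W \<theta> \<tau> * D \<theta> \<tau> a))"
    by (rule sum.cong[OF refl], rule sum.cong[OF refl], rule sum_over_fibres[OF TP, symmetric])
  also have "\<dots> = (\<Sum>k\<in>K. \<Sum>t\<in>UNIV. \<Sum>\<theta>\<in>UNIV. \<Sum>\<tau>\<in>{\<tau>\<in>TP. \<tau> k = t}. \<Sum>a\<in>UNIV. d k t a * (W \<theta> \<tau> * D \<theta> \<tau> a))"
    by (rule sum.cong[OF refl], rule sum.swap)
  also have "\<dots> = (\<Sum>k\<in>K. \<Sum>t\<in>UNIV. \<Sum>\<theta>\<in>UNIV. \<Sum>a\<in>UNIV. \<Sum>\<tau>\<in>{\<tau>\<in>TP. \<tau> k = t}. d k t a * (W \<theta> \<tau> * D \<theta> \<tau> a))"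
    by (rule sum.cong[OF refl], rule sum.cong[OF refl], rule sum.cong[OF refl], rule sum.swap)
  also have "\<dots> = (\<Sum>k\<in>K. \<Sum>t\<in>UNIV. \<Sum>a\<in>UNIV. \<Sum>\<theta>\<in>UNIV. \<Sum>\<tau>\<in>{\<tau>\<in>TP. \<tau> k = t}. d k t a * (W \<theta> \<tau> * D \<theta> \<tau> a))"
    by (rule sum.cong[OF refl], rule sum.cong[OF refl], rule sum.swap)
  also have "\<dots> = (\<Sum>k\<in>K. \<Sum>t\<in>UNIV. \<Sum>a\<in>UNIV. d k t a *
         (interim_cost p c K tp yh k t a - interim_cost p c K tp ys k t a))"
    unfolding IC by (simp add: sum_distrib_left)
  finally show ?thesis
    unfolding TP_def d_def .
qed

text \<open>Against an exact equilibrium ys, each term of the pairing above is bounded by the regret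
  of yh: the cross terms are at least the minimal interim costs, and ys attains its minimum.\<close>
lemma sum_expected_cost_gap_le_regret:
  fixes c :: "'a::finite \<Rightarrow> real ^ 'a \<Rightarrow> 't::finite \<Rightarrow> real" and tp :: "'t \<Rightarrow> (nat \<Rightarrow> 'a) pmf"
  assumes game: "basic_game p c" and info: "direct_info K gam tp" and yh: "interim_profile K gam yh"
    and eq: "BW_eps_eq p c K gam tp 0 ys"
  shows "(\<Sum>\<theta>\<in>UNIV. p \<theta> * expected_cost_gap c K tp yh ys \<theta>) \<le> regret p c K gam tp yh"
proof -
  have K: "finite K"
    using info unfolding direct_info_def by auto
  have "(\<Sum>a\<in>UNIV. (yh k t $ a - ys k t $ a) *
         (interim_cost p c K tp yh k t a - interim_cost p c K tp ys k t a))
      \<le> (\<Sum>a\<in>UNIV. yh k t $ a * interim_cost p c K tp yh k t a)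
      - gam k * Min (range (interim_cost p c K tp yh k t))" if k: "k \<in> K" for k t
  proof -
    have yk: "yh k t \<in> simplex_gamma (gam k)"
      using yh k unfolding interim_profile_def by auto
    have sk: "ys k t \<in> simplex_gamma (gam k)"
      using eq k unfolding BW_eps_eq_def interim_profile_def by auto
    have "(\<Sum>a\<in>UNIV. (yh k t $ a - ys k t $ a) *
         (interim_cost p c K tp yh k t a - interim_cost p c K tp ys k t a))
      = (\<Sum>a\<in>UNIV. yh k t $ a * interim_cost p c K tp yh k t a)
        - (\<Sum>a\<in>UNIV. ys k t $ a * interim_cost p c K tp yh k t a)
        - (\<Sum>a\<in>UNIV. yh k t $ a * interim_cost p c K tp ys k t a)
        + (\<Sum>a\<in>UNIV. ys k t $ a * interim_cost p c K tp ys k t a)"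
      by (simp add: sum_subtractf[symmetric] sum.distrib[symmetric] algebra_simps)
    moreover have "gam k * Min (range (interim_cost p c K tp yh k t))
        \<le> (\<Sum>a\<in>UNIV. ys k t $ a * interim_cost p c K tp yh k t a)"
      by (rule simplex_gamma_sum_mult_ge_Min[OF sk])
    moreover have "gam k * Min (range (interim_cost p c K tp ys k t))
        \<le> (\<Sum>a\<in>UNIV. yh k t $ a * interim_cost p c K tp ys k t a)"
      by (rule simplex_gamma_sum_mult_ge_Min[OF yk])
    moreover have "(\<Sum>a\<in>UNIV. ys k t $ a * interim_cost p c K tp ys k t a)
        = gam k * Min (range (interim_cost p c K tp ys k t))"
      by (rule BW_eq_support_cost[OF game K eq k])
    ultimately show ?thesis by linarith
  qed
  then show ?thesis
    unfolding sum_expected_cost_gap_eq[OF K] regret_def by (intro sum_mono)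
qed

lemma expected_cost_gap_le_regret:
  fixes c :: "'a::finite \<Rightarrow> real ^ 'a \<Rightarrow> 't::finite \<Rightarrow> real" and tp :: "'t \<Rightarrow> (nat \<Rightarrow> 'a) pmf"
  assumes game: "basic_game p c" and pot: "is_potential c \<Phi>" and sc: "\<forall>\<theta>. strictly_convex_on simplexY (\<Phi> \<theta>)"
    and info: "direct_info K gam tp" and yh: "interim_profile K gam yh" and eq: "BW_eps_eq p c K gam tp 0 ys"
  shows "p \<theta> * expected_cost_gap c K tp yh ys \<theta> \<le> regret p c K gam tp yh"
proof -
  have ys: "interim_profile K gam ys"
    using eq unfolding BW_eps_eq_def by auto
  have "0 \<le> p \<theta>' * expected_cost_gap c K tp yh ys \<theta>'" for \<theta>'
    using game expected_cost_gap_nonneg[OF pot sc[rule_format] info yh ys] unfolding basic_game_def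
    by (simp add: less_imp_le)
  then have "p \<theta> * expected_cost_gap c K tp yh ys \<theta> \<le> (\<Sum>\<theta>'\<in>UNIV. p \<theta>' * expected_cost_gap c K tp yh ys \<theta>')"
    by (intro member_le_sum) auto
  also have "\<dots> \<le> regret p c K gam tp yh"
    by (rule sum_expected_cost_gap_le_regret[OF game info yh eq])
  finally show ?thesis .
qed

text \<open>Two exact equilibria have zero regret, hence zero expected monotonicity gap, hence equal
  total flows on every type profile in the support.\<close>
theorem BW_outcome_unique:
  fixes c :: "'a::finite \<Rightarrow> real ^ 'a \<Rightarrow> 't::finite \<Rightarrow> real" and tp :: "'t \<Rightarrow> (nat \<Rightarrow> 'a) pmf"
  assumes game: "basic_game p c" and pot: "is_potential c \<Phi>" and sc: "\<forall>\<theta>. strictly_convex_on simplexY (\<Phi> \<theta>)"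
    and info: "direct_info K gam tp"
    and eq1: "BW_eps_eq p c K gam tp 0 y1" and eq2: "BW_eps_eq p c K gam tp 0 y2"
  shows "BW_outcome K tp y1 = BW_outcome K tp y2"
proof
  fix \<theta>
  have K: "finite K"
    using info unfolding direct_info_def by auto
  have y1: "interim_profile K gam y1" and y2: "interim_profile K gam y2"
    using eq1 eq2 unfolding BW_eps_eq_def by auto
  have "p \<theta> * expected_cost_gap c K tp y1 y2 \<theta> \<le> 0"
    using expected_cost_gap_le_regret[OF game pot sc info y1 eq2, of \<theta>]
      regret_le_if_BW_eps_eq[OF game info eq1] by simp
  moreover have "0 < p \<theta>"
    using game unfolding basic_game_def by auto
  ultimately have "expected_cost_gap c K tp y1 y2 \<theta> \<le> 0"
    by (simp add: mult_le_0_iff)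
  then have "expected_cost_gap c K tp y1 y2 \<theta> = 0"
    using expected_cost_gap_nonneg[OF pot sc[rule_format, of \<theta>] info y1 y2] by linarith
  moreover have "0 \<le> pmf (tp \<theta>) \<tau> * cost_gap c \<theta> (total_flow K y1 \<tau>) (total_flow K y2 \<tau>)" for \<tau>
    by (intro mult_nonneg_nonneg pmf_nonneg cost_gap_nonneg[OF pot sc[rule_format]]
        total_flow_in_simplex[OF info y1] total_flow_in_simplex[OF info y2])
  ultimately have zero: "\<forall>\<tau>\<in>type_profiles K. pmf (tp \<theta>) \<tau> * cost_gap c \<theta> (total_flow K y1 \<tau>) (total_flow K y2 \<tau>) = 0"
    unfolding expected_cost_gap_def using finite_type_profiles[OF K]
    by (subst (asm) sum_nonneg_eq_0_iff) auto
  show "BW_outcome K tp y1 \<theta> = BW_outcome K tp y2 \<theta>"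
    unfolding BW_outcome_def
  proof (rule map_pmf_cong[OF refl])
    fix \<tau> assume \<tau>: "\<tau> \<in> set_pmf (tp \<theta>)"
    then have "\<tau> \<in> type_profiles K"
      using info unfolding direct_info_def by auto
    moreover have "pmf (tp \<theta>) \<tau> \<noteq> 0"
      using \<tau> by (simp add: set_pmf_eq)
    ultimately have "cost_gap c \<theta> (total_flow K y1 \<tau>) (total_flow K y2 \<tau>) = 0"
      using zero by auto
    then show "total_flow K y1 \<tau> = total_flow K y2 \<tau>"
      using cost_gap_pos[OF pot sc[rule_format, of \<theta>] total_flow_in_simplex[OF info y1, of \<tau>]
          total_flow_in_simplex[OF info y2, of \<tau>]] by fastforce
  qed
qed

text \<open>Near pairs are controlled by the modulus of continuity of f, far pairs by the margin of
  the monotonicity gap.\<close>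
lemma diff_le_modulus_plus_cost_gap:
  fixes f :: "real ^ 'a::finite \<Rightarrow> real"
  assumes pot: "is_potential c \<Phi>" and sc: "strictly_convex_on simplexY (\<Phi> \<theta>)"
    and y: "y \<in> simplexY" and z: "z \<in> simplexY"
    and M: "\<forall>y\<in>simplexY. \<bar>f y\<bar> \<le> M"
    and \<zeta>: "0 \<le> \<zeta>" "\<forall>y\<in>simplexY. \<forall>y'\<in>simplexY. dist y y' < \<eta> \<longrightarrow> \<bar>f y - f y'\<bar> \<le> \<zeta>"
    and \<kappa>: "0 < \<kappa>" "\<forall>y\<in>simplexY. \<forall>y'\<in>simplexY. \<eta> \<le> dist y y' \<longrightarrow> \<kappa> \<le> cost_gap c \<theta> y y'"
  shows "\<bar>f y - f z\<bar> \<le> \<zeta> + 2 * M / \<kappa> * cost_gap c \<theta> y z"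
proof -
  have M0: "0 \<le> M"
    using M y by (meson abs_ge_zero order_trans)
  have gap: "0 \<le> 2 * M / \<kappa> * cost_gap c \<theta> y z"
    using M0 \<kappa>(1) cost_gap_nonneg[OF pot sc y z] by simp
  show ?thesis
  proof (cases "dist y z < \<eta>")
    case True
    then show ?thesis
      using \<zeta>(2) y z gap by fastforce
  next
    case False
    then have "\<kappa> \<le> cost_gap c \<theta> y z"
      using \<kappa>(2) y z by auto
    have "\<bar>f y - f z\<bar> \<le> 2 * M"
      using M y z by (smt (verit))
    also have "\<dots> = 2 * M / \<kappa> * \<kappa>"
      using \<kappa>(1) by simp
    also have "\<dots> \<le> 2 * M / \<kappa> * cost_gap c \<theta> y z"
      using \<open>\<kappa> \<le> _\<close> M0 \<kappa>(1) by (intro mult_left_mono) auto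
    finally show ?thesis
      using \<zeta>(1) by simp
  qed
qed

lemma BW_outcome_expectation_close:
  fixes c :: "'a::finite \<Rightarrow> real ^ 'a \<Rightarrow> 't::finite \<Rightarrow> real" and tp :: "'t \<Rightarrow> (nat \<Rightarrow> 'a) pmf"
    and f :: "real ^ 'a \<Rightarrow> real"
  assumes game: "basic_game p c" and pot: "is_potential c \<Phi>" and sc: "\<forall>\<theta>. strictly_convex_on simplexY (\<Phi> \<theta>)"
    and info: "direct_info K gam tp" and yh: "interim_profile K gam yh" and eq: "BW_eps_eq p c K gam tp 0 ys"
    and M: "\<forall>y\<in>simplexY. \<bar>f y\<bar> \<le> M"
    and \<zeta>: "0 \<le> \<zeta>" "\<forall>y\<in>simplexY. \<forall>y'\<in>simplexY. dist y y' < \<eta> \<longrightarrow> \<bar>f y - f y'\<bar> \<le> \<zeta>"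
    and \<kappa>: "0 < \<kappa>" "\<forall>y\<in>simplexY. \<forall>y'\<in>simplexY. \<eta> \<le> dist y y' \<longrightarrow> \<kappa> \<le> cost_gap c \<theta> y y'"
  shows "\<bar>measure_pmf.expectation (BW_outcome K tp yh \<theta>) f - measure_pmf.expectation (BW_outcome K tp ys \<theta>) f\<bar>
      \<le> \<zeta> + 2 * M * regret p c K gam tp yh / (p \<theta> * \<kappa>)"
proof -
  have K: "finite K"
    using info unfolding direct_info_def by auto
  have ys: "interim_profile K gam ys"
    using eq unfolding BW_eps_eq_def by auto
  define TP where "TP = (type_profiles K :: (nat \<Rightarrow> 'a) set)"
  define y where "y \<tau> = total_flow K yh \<tau>" for \<tau>
  define z where "z \<tau> = total_flow K ys \<tau>" for \<tau>
  have yz: "y \<tau> \<in> simplexY" "z \<tau> \<in> simplexY" for \<tau>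
    unfolding y_def z_def by (intro total_flow_in_simplex[OF info] yh ys)+
  have M0: "0 \<le> M"
    using M yz by (meson abs_ge_zero order_trans)
  have p: "0 < p \<theta>"
    using game unfolding basic_game_def by auto
  have sum1: "(\<Sum>\<tau>\<in>TP. pmf (tp \<theta>) \<tau>) = 1"
    unfolding TP_def using info finite_type_profiles[OF K] unfolding direct_info_def
    by (intro sum_pmf_eq_1) auto
  have "(\<Sum>\<tau>\<in>TP. pmf (tp \<theta>) \<tau> * cost_gap c \<theta> (y \<tau>) (z \<tau>)) \<le> regret p c K gam tp yh / p \<theta>"
    using expected_cost_gap_le_regret[OF game pot sc info yh eq, of \<theta>] p
    unfolding expected_cost_gap_def TP_def y_def z_def by (simp add: le_divide_eq mult.commute)
  then have "2 * M / \<kappa> * (\<Sum>\<tau>\<in>TP. pmf (tp \<theta>) \<tau> * cost_gap c \<theta> (y \<tau>) (z \<tau>))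
      \<le> 2 * M / \<kappa> * (regret p c K gam tp yh / p \<theta>)"
    using M0 \<kappa>(1) by (intro mult_left_mono) auto
  then have gap: "2 * M / \<kappa> * (\<Sum>\<tau>\<in>TP. pmf (tp \<theta>) \<tau> * cost_gap c \<theta> (y \<tau>) (z \<tau>))
      \<le> 2 * M * regret p c K gam tp yh / (p \<theta> * \<kappa>)"
    by (simp add: mult.commute)
  have "\<bar>measure_pmf.expectation (BW_outcome K tp yh \<theta>) f - measure_pmf.expectation (BW_outcome K tp ys \<theta>) f\<bar>
      = \<bar>\<Sum>\<tau>\<in>TP. pmf (tp \<theta>) \<tau> * (f (y \<tau>) - f (z \<tau>))\<bar>"
    unfolding expectation_BW_outcome[OF info] TP_def y_def z_def
    by (simp add: sum_subtractf[symmetric] algebra_simps)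
  also have "\<dots> \<le> (\<Sum>\<tau>\<in>TP. pmf (tp \<theta>) \<tau> * \<bar>f (y \<tau>) - f (z \<tau>)\<bar>)"
    by (rule order_trans[OF sum_abs]) (simp add: abs_mult)
  also have "\<dots> \<le> (\<Sum>\<tau>\<in>TP. pmf (tp \<theta>) \<tau> * (\<zeta> + 2 * M / \<kappa> * cost_gap c \<theta> (y \<tau>) (z \<tau>)))"
    by (intro sum_mono mult_left_mono pmf_nonneg
        diff_le_modulus_plus_cost_gap[OF pot sc[rule_format] yz M \<zeta> \<kappa>])
  also have "\<dots> = \<zeta> * (\<Sum>\<tau>\<in>TP. pmf (tp \<theta>) \<tau>)
      + 2 * M / \<kappa> * (\<Sum>\<tau>\<in>TP. pmf (tp \<theta>) \<tau> * cost_gap c \<theta> (y \<tau>) (z \<tau>))"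
    by (simp add: sum.distrib sum_distrib_left algebra_simps)
  also have "\<dots> \<le> \<zeta> + 2 * M * regret p c K gam tp yh / (p \<theta> * \<kappa>)"
    using gap unfolding sum1 by simp
  finally show ?thesis .
qed

section \<open>Existence of an equilibrium by minimising the expected potential\<close>

lemma compact_PiE_UNIV:
  assumes "\<And>i. compact (S i)"
  shows "compact (PiE UNIV S :: ('i \<Rightarrow> 'b::topological_space) set)"
proof -
  have "compactin (product_topology (\<lambda>i. euclidean) UNIV) (PiE UNIV S :: ('i \<Rightarrow> 'b) set)"
    using assms by (subst compactin_PiE) auto
  then show ?thesis
    unfolding euclidean_product_topology by simp
qed

text \<open>Interim profiles, with the coordinates of populations outside K pinned to 0 so that the
  set is compact in the product topology.\<close>
definition profile_space :: "nat set \<Rightarrow> (nat \<Rightarrow> real) \<Rightarrow> (nat \<Rightarrow> 'a \<Rightarrow> real ^ 'a::finite) set" where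
  "profile_space K gam = PiE UNIV (\<lambda>k. PiE UNIV (\<lambda>t. if k \<in> K then simplex_gamma (gam k) else {0}))"

lemma mem_profile_space_iff:
  "yh \<in> profile_space K gam \<longleftrightarrow> interim_profile K gam yh \<and> (\<forall>k t. k \<notin> K \<longrightarrow> yh k t = 0)"
  unfolding profile_space_def interim_profile_def PiE_UNIV_domain by (auto simp: Pi_iff)

lemma compact_profile_space: "compact (profile_space K gam)"
  unfolding profile_space_def by (intro compact_PiE_UNIV) (auto intro: compact_simplex_gamma)

lemma profile_space_nonempty:
  assumes "\<forall>k\<in>K. 0 < gam k"
  shows "profile_space K gam \<noteq> ({} :: (nat \<Rightarrow> 'a::finite \<Rightarrow> real ^ 'a) set)"
proof -
  have "(\<lambda>k t. if k \<in> K then gam k *\<^sub>R axis (undefined::'a) 1 else 0) \<in> profile_space K gam"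
    using assms unfolding mem_profile_space_iff interim_profile_def simplex_gamma_def
    by (auto simp: axis_def if_distrib sum.delta' less_imp_le cong: if_cong)
  then show ?thesis by blast
qed

definition expected_potential :: "('t::finite \<Rightarrow> real) \<Rightarrow> ('t \<Rightarrow> real ^ 'a::finite \<Rightarrow> real) \<Rightarrow> nat set
    \<Rightarrow> ('t \<Rightarrow> (nat \<Rightarrow> 'a) pmf) \<Rightarrow> (nat \<Rightarrow> 'a \<Rightarrow> real ^ 'a) \<Rightarrow> real" where
  "expected_potential p \<Phi> K tp yh =
     (\<Sum>\<theta>\<in>UNIV. p \<theta> * (\<Sum>\<tau>\<in>type_profiles K. pmf (tp \<theta>) \<tau> * \<Phi> \<theta> (total_flow K yh \<tau>)))"

lemma continuous_on_expected_potential: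
  assumes pot: "is_potential c \<Phi>" and info: "direct_info K gam tp"
  shows "continuous_on (profile_space K gam) (expected_potential p \<Phi> K tp)"
proof -
  define S where "S = (profile_space K gam :: (nat \<Rightarrow> 'a \<Rightarrow> real ^ 'a) set)"
  have "continuous_on S (\<lambda>yh. yh k)" for k
    using continuous_on_product_then_coordinatewise[of S "\<lambda>yh. yh" k] continuous_on_id by simp
  then have "continuous_on S (\<lambda>yh. yh k t)" for k t
    using continuous_on_product_then_coordinatewise by fastforce
  then have "continuous_on S (\<lambda>yh. total_flow K yh \<tau>)" for \<tau>
    unfolding total_flow_def by (intro continuous_on_sum)
  moreover have "(\<lambda>yh. total_flow K yh \<tau>) ` S \<subseteq> simplexY" for \<tau>
    unfolding S_def using total_flow_in_simplex[OF info] by (auto simp: mem_profile_space_iff)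
  ultimately show ?thesis
    unfolding expected_potential_def S_def[symmetric]
    by (intro continuous_intros continuous_on_compose2[OF continuous_on_potential[OF pot]])
qed

definition shift_mass :: "(nat \<Rightarrow> 'a \<Rightarrow> real ^ 'a::finite) \<Rightarrow> nat \<Rightarrow> 'a \<Rightarrow> 'a \<Rightarrow> 'a \<Rightarrow> real
    \<Rightarrow> nat \<Rightarrow> 'a \<Rightarrow> real ^ 'a" where
  "shift_mass yh k t a b s = yh(k := (yh k)(t := yh k t + s *\<^sub>R (axis b 1 - axis a 1)))"

lemma total_flow_shift_mass:
  assumes "finite K" and "k \<in> K"
  shows "total_flow K (shift_mass yh k t a b s) \<tau>
    = total_flow K yh \<tau> + s *\<^sub>R (if \<tau> k = t then axis b 1 - axis a 1 else 0)"
proof -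
  have "shift_mass yh k t a b s j (\<tau> j)
      = yh j (\<tau> j) + (if j = k then s *\<^sub>R (if \<tau> k = t then axis b 1 - axis a 1 else 0) else 0)" for j
    unfolding shift_mass_def by auto
  then show ?thesis
    unfolding total_flow_def using assms by (simp add: sum.distrib)
qed

lemma shift_mass_in_profile_space:
  assumes yh: "yh \<in> profile_space K gam" and k: "k \<in> K" and s: "0 \<le> s" "s \<le> yh k t $ a"
  shows "shift_mass yh k t a b s \<in> profile_space K gam"
proof -
  have old: "yh k t \<in> simplex_gamma (gam k)"
    using yh k unfolding mem_profile_space_iff interim_profile_def by auto
  have "0 \<le> (yh k t + s *\<^sub>R (axis b 1 - axis a 1)) $ c" for c
    using old s unfolding simplex_gamma_def by (auto simp: axis_def)
  moreover have "(\<Sum>c\<in>UNIV. (yh k t + s *\<^sub>R (axis b 1 - axis a 1)) $ c) = gam k"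
    using old unfolding simplex_gamma_def
    by (simp add: sum.distrib sum_subtractf sum_distrib_left[symmetric] axis_def)
  ultimately have "yh k t + s *\<^sub>R (axis b 1 - axis a 1) \<in> simplex_gamma (gam k)"
    unfolding simplex_gamma_def by auto
  then show ?thesis
    using yh k unfolding mem_profile_space_iff interim_profile_def shift_mass_def by auto
qed

lemma expected_potential_shift_mass_derivative:
  fixes c :: "'a::finite \<Rightarrow> real ^ 'a \<Rightarrow> 't::finite \<Rightarrow> real" and tp :: "'t \<Rightarrow> (nat \<Rightarrow> 'a) pmf"
  assumes pot: "is_potential c \<Phi>" and info: "direct_info K gam tp" and yh: "interim_profile K gam yh"
    and k: "k \<in> K"
  shows "((\<lambda>s. expected_potential p \<Phi> K tp (shift_mass yh k t a b s)) has_real_derivative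
      interim_cost p c K tp yh k t b - interim_cost p c K tp yh k t a) (at 0)"
proof -
  have K: "finite K"
    using info unfolding direct_info_def by auto
  define TP where "TP = (type_profiles K :: (nat \<Rightarrow> 'a) set)"
  define w where "w \<tau> = (if \<tau> k = t then axis b 1 - axis a (1::real) else 0)" for \<tau> :: "nat \<Rightarrow> 'a"
  obtain grad where der: "\<And>\<theta> y. y \<in> simplexY \<Longrightarrow> (\<Phi> \<theta> has_derivative (\<lambda>h. grad \<theta> y \<bullet> h)) (at y)"
    and grad: "\<And>\<theta> y a. y \<in> simplexY \<Longrightarrow> grad \<theta> y $ a = c a y \<theta>"
    using potential_gradient[OF pot] by metis
  have y: "total_flow K yh \<tau> \<in> simplexY" for \<tau>
    using total_flow_in_simplex[OF info yh] .
  have "expected_potential p \<Phi> K tp (shift_mass yh k t a b s)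
      = (\<Sum>\<theta>\<in>UNIV. p \<theta> * (\<Sum>\<tau>\<in>TP. pmf (tp \<theta>) \<tau> * \<Phi> \<theta> (total_flow K yh \<tau> + s *\<^sub>R w \<tau>)))" for s
    unfolding expected_potential_def total_flow_shift_mass[OF K k] TP_def w_def ..
  moreover have "((\<lambda>s. \<Sum>\<theta>\<in>UNIV. p \<theta> * (\<Sum>\<tau>\<in>TP. pmf (tp \<theta>) \<tau> * \<Phi> \<theta> (total_flow K yh \<tau> + s *\<^sub>R w \<tau>)))
      has_real_derivative (\<Sum>\<theta>\<in>UNIV. p \<theta> * (\<Sum>\<tau>\<in>TP. pmf (tp \<theta>) \<tau> * (grad \<theta> (total_flow K yh \<tau>) \<bullet> w \<tau>)))) (at 0)"
    by (intro DERIV_sum DERIV_cmult has_real_derivative_along_line der y)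
  moreover have "(\<Sum>\<theta>\<in>UNIV. p \<theta> * (\<Sum>\<tau>\<in>TP. pmf (tp \<theta>) \<tau> * (grad \<theta> (total_flow K yh \<tau>) \<bullet> w \<tau>)))
      = (\<Sum>\<theta>\<in>UNIV. \<Sum>\<tau>\<in>TP. if \<tau> k = t then p \<theta> * pmf (tp \<theta>) \<tau> *
           (c b (total_flow K yh \<tau>) \<theta> - c a (total_flow K yh \<tau>) \<theta>) else 0)"
    unfolding w_def
    by (auto simp: sum_distrib_left inner_diff_right inner_axis grad[OF y] intro!: sum.cong)
  moreover have "\<dots> = interim_cost p c K tp yh k t b - interim_cost p c K tp yh k t a"
    unfolding interim_cost_def TP_def sum.inter_filter[OF finite_type_profiles[OF K], symmetric]
    by (simp add: sum_subtractf[symmetric] algebra_simps)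
  ultimately show ?thesis
    by simp
qed

text \<open>A minimiser of the expected potential is an equilibrium: otherwise shifting a little
  mass to a cheaper action would decrease the potential.\<close>
theorem BW_eq_exists:
  fixes c :: "'a::finite \<Rightarrow> real ^ 'a \<Rightarrow> 't::finite \<Rightarrow> real" and tp :: "'t \<Rightarrow> (nat \<Rightarrow> 'a) pmf"
  assumes pot: "is_potential c \<Phi>" and info: "direct_info K gam tp"
  shows "\<exists>ys. BW_eps_eq p c K gam tp 0 ys"
proof -
  have K: "finite K"
    using info unfolding direct_info_def by auto
  obtain ys where ys: "ys \<in> profile_space K gam"
    and min: "\<forall>yh\<in>profile_space K gam. expected_potential p \<Phi> K tp ys \<le> expected_potential p \<Phi> K tp yh"
    using continuous_attains_inf[OF compact_profile_space profile_space_nonempty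
        continuous_on_expected_potential[OF pot info]] info
    unfolding direct_info_def by blast
  have "interim_cost p c K tp ys k t a \<le> interim_cost p c K tp ys k t b"
    if k: "k \<in> K" and pos: "0 < ys k t $ a" for k t a b
  proof (rule ccontr)
    assume "\<not> ?thesis"
    then obtain d where d: "0 < d"
      and dec: "\<And>h. 0 < h \<Longrightarrow> h < d \<Longrightarrow> expected_potential p \<Phi> K tp (shift_mass ys k t a b h)
          < expected_potential p \<Phi> K tp (shift_mass ys k t a b 0)"
      using DERIV_neg_dec_right[OF expected_potential_shift_mass_derivative[OF pot info _ k]] ys
      unfolding mem_profile_space_iff by (metis add_0 diff_less_0_iff_less not_le)
    define h where "h = min (d/2) (ys k t $ a)"
    have h: "0 < h" "h < d" "h \<le> ys k t $ a"
      unfolding h_def using d pos by auto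
    have "shift_mass ys k t a b 0 = ys"
      unfolding shift_mass_def by simp
    moreover have "shift_mass ys k t a b h \<in> profile_space K gam"
      using shift_mass_in_profile_space[OF ys k _ h(3)] h(1) by simp
    ultimately show False
      using dec[OF h(1,2)] min by fastforce
  qed
  then have "BW_eps_eq p c K gam tp 0 ys"
    using ys unfolding BW_eps_eq_def mem_profile_space_iff by auto
  then show ?thesis by blast
qed

section \<open>Discretising an outcome on the grid of mesh 1/n\<close>

definition grid_count :: "nat \<Rightarrow> 'a \<Rightarrow> real ^ 'a::finite \<Rightarrow> 'a \<Rightarrow> nat" where
  "grid_count n a0 y a = (if a = a0 then n - (\<Sum>b\<in>UNIV - {a0}. nat \<lfloor>real n * y $ b\<rfloor>)
     else nat \<lfloor>real n * y $ a\<rfloor>)"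

definition grid_point :: "nat \<Rightarrow> ('a::finite \<Rightarrow> nat) \<Rightarrow> real ^ 'a" where
  "grid_point n m = (\<chi> a. real (m a) / real n)"

definition weak_compositions :: "nat \<Rightarrow> ('a::finite \<Rightarrow> nat) set" where
  "weak_compositions n = {m. sum m UNIV = n}"

lemma finite_weak_compositions: "finite (weak_compositions n :: ('a::finite \<Rightarrow> nat) set)"
proof -
  have "weak_compositions n \<subseteq> PiE (UNIV::'a set) (\<lambda>_. {..n})"
    unfolding weak_compositions_def
    by (auto simp: PiE_UNIV_domain intro: member_le_sum[of _ UNIV, simplified])
  moreover have "finite (PiE (UNIV::'a set) (\<lambda>_. {..n}))"
    by (intro finite_PiE) auto
  ultimately show ?thesis
    by (rule finite_subset)
qed

lemma grid_point_in_simplex: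
  assumes "m \<in> weak_compositions n" and "0 < n"
  shows "grid_point n m \<in> simplexY"
  using assms unfolding grid_point_def simplex_gamma_def weak_compositions_def
  by (auto simp: sum_divide_distrib[symmetric])

lemma sum_floor_le:
  assumes y: "y \<in> simplexY"
  shows "(\<Sum>b\<in>UNIV - {a0}. nat \<lfloor>real n * (y::real ^ 'a::finite) $ b\<rfloor>) \<le> n"
proof -
  have y0: "\<forall>a. 0 \<le> y $ a" "(\<Sum>a\<in>UNIV. y $ a) = 1"
    using y unfolding simplex_gamma_def by auto
  have "real (\<Sum>b\<in>UNIV - {a0}. nat \<lfloor>real n * y $ b\<rfloor>) = (\<Sum>b\<in>UNIV - {a0}. real (nat \<lfloor>real n * y $ b\<rfloor>))"
    by simp
  also have "\<dots> \<le> (\<Sum>b\<in>UNIV - {a0}. real n * y $ b)"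
    using y0 by (intro sum_mono) (simp add: of_nat_nat)
  also have "\<dots> \<le> (\<Sum>b\<in>UNIV. real n * y $ b)"
    using y0 by (intro sum_mono2) auto
  also have "\<dots> = real n"
    using y0 by (simp add: sum_distrib_left[symmetric])
  finally show ?thesis
    by (simp only: of_nat_le_iff)
qed

lemma grid_count_in_weak_compositions:
  assumes y: "y \<in> simplexY"
  shows "grid_count n a0 (y::real ^ 'a::finite) \<in> weak_compositions n"
proof -
  have "(\<Sum>a\<in>UNIV. grid_count n a0 y a) = grid_count n a0 y a0 + (\<Sum>a\<in>UNIV - {a0}. grid_count n a0 y a)"
    by (simp add: sum.remove)
  also have "(\<Sum>a\<in>UNIV - {a0}. grid_count n a0 y a) = (\<Sum>b\<in>UNIV - {a0}. nat \<lfloor>real n * y $ b\<rfloor>)"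
    unfolding grid_count_def by (intro sum.cong) auto
  finally show ?thesis
    using sum_floor_le[OF y, of n a0] unfolding weak_compositions_def grid_count_def by simp
qed

lemma round_down_error_bounds:
  fixes x :: real
  assumes x: "0 \<le> x" and n: "0 < n"
  shows "0 \<le> x - real (nat \<lfloor>real n * x\<rfloor>) / real n" and "x - real (nat \<lfloor>real n * x\<rfloor>) / real n < 1 / real n"
proof -
  have "real (nat \<lfloor>real n * x\<rfloor>) = real_of_int \<lfloor>real n * x\<rfloor>"
    using x by (simp add: of_nat_nat)
  then have "0 \<le> real n * x - real (nat \<lfloor>real n * x\<rfloor>)" "real n * x - real (nat \<lfloor>real n * x\<rfloor>) < 1"
    using real_of_int_floor_gt_diff_one[of "real n * x"] of_int_floor_le[of "real n * x"] by linarith+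
  moreover have "x - real (nat \<lfloor>real n * x\<rfloor>) / real n = (real n * x - real (nat \<lfloor>real n * x\<rfloor>)) / real n"
    using n by (simp add: diff_divide_distrib)
  ultimately show "0 \<le> x - real (nat \<lfloor>real n * x\<rfloor>) / real n" "x - real (nat \<lfloor>real n * x\<rfloor>) / real n < 1 / real n"
    using n by (simp_all add: divide_strict_right_mono)
qed

text \<open>Every coordinate except a0 is rounded down by less than 1/n, and the coordinate a0
  absorbs all these errors.\<close>
lemma grid_point_grid_count_component_error:
  assumes y: "y \<in> simplexY" and n: "0 < n"
  shows "\<bar>grid_point n (grid_count n a0 y) $ a - (y::real ^ 'a::finite) $ a\<bar> \<le> real CARD('a) / real n"
proof -
  define e where "e b = y $ b - real (nat \<lfloor>real n * y $ b\<rfloor>) / real n" for b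
  have y0: "\<forall>a. 0 \<le> y $ a" "(\<Sum>a\<in>UNIV. y $ a) = 1"
    using y unfolding simplex_gamma_def by auto
  have e: "0 \<le> e b" "e b < 1 / real n" for b
    unfolding e_def using round_down_error_bounds[OF _ n] y0 by auto
  show ?thesis
  proof (cases "a = a0")
    case False
    then have "\<bar>grid_point n (grid_count n a0 y) $ a - y $ a\<bar> = e a"
      using e[of a] unfolding grid_point_def grid_count_def e_def by auto
    also have "\<dots> \<le> 1 / real n"
      using e[of a] by simp
    also have "\<dots> \<le> real CARD('a) / real n"
      using n by (intro divide_right_mono) (auto simp: Suc_le_eq)
    finally show ?thesis .
  next
    case True
    have "grid_point n (grid_count n a0 y) $ a
        = 1 - (\<Sum>b\<in>UNIV - {a0}. real (nat \<lfloor>real n * y $ b\<rfloor>) / real n)"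
      using True sum_floor_le[OF y, of n a0] n unfolding grid_point_def grid_count_def
      by (simp add: of_nat_diff diff_divide_distrib sum_divide_distrib[symmetric])
    moreover have "y $ a = 1 - (\<Sum>b\<in>UNIV - {a0}. y $ b)"
      using y0(2) True by (simp add: sum.remove[of UNIV a0])
    ultimately have "grid_point n (grid_count n a0 y) $ a - y $ a = (\<Sum>b\<in>UNIV - {a0}. e b)"
      unfolding e_def by (simp add: sum_subtractf)
    moreover have "(\<Sum>b\<in>UNIV - {a0}. e b) \<le> (\<Sum>b\<in>(UNIV::'a set) - {a0}. 1 / real n)"
      using e by (intro sum_mono) (auto intro: less_imp_le)
    moreover have "(\<Sum>b\<in>(UNIV::'a set) - {a0}. 1 / real n) \<le> real CARD('a) / real n"
      using n by (simp add: card_Diff_subset divide_right_mono)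
    moreover have "0 \<le> (\<Sum>b\<in>UNIV - {a0}. e b)"
      using e by (intro sum_nonneg) auto
    ultimately show ?thesis
      by auto
  qed
qed

lemma dist_grid_point_grid_count_le:
  assumes y: "y \<in> simplexY" and n: "0 < n"
  shows "dist (grid_point n (grid_count n a0 y)) (y::real ^ 'a::finite) \<le> real CARD('a) * real CARD('a) / real n"
proof -
  have "(\<Sum>a\<in>UNIV. \<bar>(grid_point n (grid_count n a0 y) - y) $ a\<bar>) \<le> (\<Sum>a\<in>(UNIV::'a set). real CARD('a) / real n)"
    using grid_point_grid_count_component_error[OF y n] by (intro sum_mono) simp
  then show ?thesis
    using norm_le_l1_cart[of "grid_point n (grid_count n a0 y) - y"] by (simp add: dist_norm)
qed

lemma space_eq_simplex:
  assumes "sets M = sets (restrict_space borel (simplexY :: (real ^ 'a::finite) set))"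
  shows "space M = simplexY"
  using sets_eq_imp_space_eq[OF assms] by (simp add: space_restrict_space)

lemma grid_count_level_set_measurable:
  assumes S: "sets M = sets (restrict_space borel (simplexY :: (real ^ 'a::finite) set))"
  shows "{y \<in> space M. grid_count n a0 y = m} \<in> sets M"
proof -
  have "{y::real ^ 'a. grid_count n a0 y = m} = {y \<in> space borel. \<forall>b. grid_count n a0 y b = m b}"
    by (auto simp: fun_eq_iff)
  also have "\<dots> \<in> sets borel"
    unfolding grid_count_def by measurable
  finally have "simplexY \<inter> {y::real ^ 'a. grid_count n a0 y = m} \<in> sets (restrict_space borel simplexY)"
    by (auto simp: sets_restrict_space)
  moreover have "{y \<in> space M. grid_count n a0 y = m} = simplexY \<inter> {y. grid_count n a0 y = m}"
    using space_eq_simplex[OF S] by auto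
  ultimately show ?thesis
    unfolding S by simp
qed

lemma
  fixes h :: "real ^ 'a::finite \<Rightarrow> real"
  assumes P: "prob_space M" and S: "sets M = sets (restrict_space borel (simplexY :: (real ^ 'a) set))"
  shows integrable_grid_discretisation: "integrable M (\<lambda>y. h (grid_point n (grid_count n a0 y)))"
    and integral_grid_discretisation: "(\<integral>y. h (grid_point n (grid_count n a0 y)) \<partial>M)
      = (\<Sum>m\<in>weak_compositions n. measure M {y \<in> space M. grid_count n a0 y = m} * h (grid_point n m))"
proof -
  interpret prob_space M by (rule P)
  define E where "E m = {y \<in> space M. grid_count n a0 y = m}" for m
  have eq: "h (grid_point n (grid_count n a0 y)) = (\<Sum>m\<in>weak_compositions n. h (grid_point n m) * indicator (E m) y)"
    if y: "y \<in> space M" for y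
  proof -
    have "grid_count n a0 y \<in> weak_compositions n"
      using grid_count_in_weak_compositions y space_eq_simplex[OF S] by auto
    moreover have "(\<Sum>m\<in>weak_compositions n. h (grid_point n m) * indicator (E m) y)
        = (\<Sum>m\<in>weak_compositions n. if m = grid_count n a0 y then h (grid_point n m) else 0)"
      using y unfolding E_def by (intro sum.cong) (auto simp: indicator_def)
    ultimately show ?thesis
      by (simp add: sum.delta[OF finite_weak_compositions])
  qed
  have int: "integrable M (\<lambda>y. h (grid_point n m) * indicator (E m) y)" for m
    using grid_count_level_set_measurable[OF S] unfolding E_def
    by (intro integrable_mult_right integrable_real_indicator) (auto simp: less_top[symmetric])
  have "integrable M (\<lambda>y. \<Sum>m\<in>weak_compositions n. h (grid_point n m) * indicator (E m) y)"
    by (intro Bochner_Integration.integrable_sum int)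
  moreover have "integrable M (\<lambda>y. h (grid_point n (grid_count n a0 y)))
      = integrable M (\<lambda>y. \<Sum>m\<in>weak_compositions n. h (grid_point n m) * indicator (E m) y)"
    by (rule Bochner_Integration.integrable_cong) (auto simp: eq)
  ultimately show "integrable M (\<lambda>y. h (grid_point n (grid_count n a0 y)))"
    by simp
  have "(\<integral>y. h (grid_point n (grid_count n a0 y)) \<partial>M)
      = (\<integral>y. (\<Sum>m\<in>weak_compositions n. h (grid_point n m) * indicator (E m) y) \<partial>M)"
    by (rule Bochner_Integration.integral_cong) (auto simp: eq)
  also have "\<dots> = (\<Sum>m\<in>weak_compositions n. \<integral>y. h (grid_point n m) * indicator (E m) y \<partial>M)"
    by (rule Bochner_Integration.integral_sum) (rule int)
  also have "\<dots> = (\<Sum>m\<in>weak_compositions n. measure M (E m) * h (grid_point n m))"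
    unfolding E_def by (intro sum.cong refl) (simp add: Int_absorb2)
  finally show "(\<integral>y. h (grid_point n (grid_count n a0 y)) \<partial>M)
      = (\<Sum>m\<in>weak_compositions n. measure M {y \<in> space M. grid_count n a0 y = m} * h (grid_point n m))"
    unfolding E_def .
qed

lemma integrable_continuous_on_simplex:
  fixes h :: "real ^ 'a::finite \<Rightarrow> real"
  assumes P: "prob_space M" and S: "sets M = sets (restrict_space borel (simplexY :: (real ^ 'a) set))"
    and h: "continuous_on simplexY h"
  shows "integrable M h"
proof -
  interpret prob_space M by (rule P)
  have "h \<in> borel_measurable M"
    using borel_measurable_continuous_on_restrict[OF h] measurable_cong_sets[OF S refl] by blast
  moreover obtain B where "\<forall>y\<in>simplexY. norm (h y) \<le> B"
    using compact_imp_bounded[OF compact_continuous_image[OF h compact_simplex_gamma]]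
    unfolding bounded_iff by auto
  ultimately show ?thesis
    using space_eq_simplex[OF S] by (intro integrable_const_bound[where B=B]) auto
qed

lemma sum_grid_discretisation_close:
  fixes h :: "real ^ 'a::finite \<Rightarrow> real"
  assumes P: "prob_space M" and S: "sets M = sets (restrict_space borel (simplexY :: (real ^ 'a) set))"
    and h: "continuous_on simplexY h" and close: "\<forall>y\<in>simplexY. \<bar>h (grid_point n (grid_count n a0 y)) - h y\<bar> \<le> \<zeta>"
  shows "\<bar>(\<Sum>m\<in>weak_compositions n. measure M {y \<in> space M. grid_count n a0 y = m} * h (grid_point n m))
    - (\<integral>y. h y \<partial>M)\<bar> \<le> \<zeta>"
proof -
  interpret prob_space M by (rule P)
  have i1: "integrable M (\<lambda>y. h (grid_point n (grid_count n a0 y)))"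
    by (rule integrable_grid_discretisation[OF P S])
  have i2: "integrable M h"
    by (rule integrable_continuous_on_simplex[OF P S h])
  have "\<bar>(\<integral>y. h (grid_point n (grid_count n a0 y)) \<partial>M) - (\<integral>y. h y \<partial>M)\<bar>
      = \<bar>\<integral>y. h (grid_point n (grid_count n a0 y)) - h y \<partial>M\<bar>"
    using i1 i2 by simp
  also have "\<dots> \<le> (\<integral>y. \<zeta> \<partial>M)"
    by (rule integral_abs_bound_integral) (use i1 i2 close space_eq_simplex[OF S] in auto)
  also have "\<dots> = \<zeta>"
    by (simp add: prob_space)
  finally show ?thesis
    by (simp add: integral_grid_discretisation[OF P S])
qed

section \<open>Type profiles with prescribed type counts\<close>

lemma inj_on_rotation: "inj_on (\<lambda>r. (k + r) mod n) {..<n::nat}"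
proof (rule inj_onI)
  have "r = r'" if "(k + r) mod n = (k + r') mod n" "r < n" "r' < n" "r \<le> r'" for r r'
  proof -
    have "n dvd r' - r"
      using mod_eq_dvd_iff_nat[of "k + r" "k + r'" n] that by simp
    then show ?thesis
      using that nat_dvd_not_less[of "r' - r" n] by (cases "r = r'") auto
  qed
  then show "r = r'" if "r \<in> {..<n}" "r' \<in> {..<n}" "(k + r) mod n = (k + r') mod n" for r r'
    using that by (metis lessThan_iff nle_le)
qed

lemma card_rotation:
  fixes n k :: nat
  assumes "0 < n"
  shows "card {r\<in>{..<n}. P ((k + r) mod n)} = card {j\<in>{..<n}. P j}"
proof -
  define f where "f r = (k + r) mod n" for r
  have inj: "inj_on f {..<n}"
    unfolding f_def by (rule inj_on_rotation)
  moreover have "f ` {..<n} \<subseteq> {..<n}"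
    unfolding f_def using assms by auto
  ultimately have surj: "f ` {..<n} = {..<n}"
    by (intro endo_inj_surj) auto
  have "f ` {r\<in>{..<n}. P (f r)} = {j\<in>{..<n}. P j}"
  proof
    show "{j\<in>{..<n}. P j} \<subseteq> f ` {r\<in>{..<n}. P (f r)}"
    proof
      fix j assume j: "j \<in> {j\<in>{..<n}. P j}"
      then obtain r where "r \<in> {..<n}" "j = f r"
        using surj by blast
      with j show "j \<in> f ` {r\<in>{..<n}. P (f r)}"
        by auto
    qed
  qed (use surj in auto)
  moreover have "card (f ` {r\<in>{..<n}. P (f r)}) = card {r\<in>{..<n}. P (f r)}"
    by (rule card_image) (rule inj_on_subset[OF inj], auto)
  ultimately show ?thesis
    unfolding f_def by simp
qed

lemma ex_assignment_with_counts:
  "sum m (UNIV::'a::finite set) = n \<Longrightarrow> \<exists>\<sigma>::nat \<Rightarrow> 'a. \<forall>a. card {j\<in>{..<n}. \<sigma> j = a} = m a"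
proof (induction n arbitrary: m)
  case 0
  then show ?case by simp
next
  case (Suc n)
  have "\<exists>a1. 0 < m a1"
  proof (rule ccontr)
    assume "\<not> ?thesis"
    then have "\<forall>a. m a = 0" by simp
    then show False using Suc.prems by simp
  qed
  then obtain a1 where a1: "0 < m a1"
    by blast
  define m' where "m' = m(a1 := m a1 - 1)"
  have "sum m' UNIV = n"
    using Suc.prems a1 sum.remove[of UNIV a1 m] sum.remove[of UNIV a1 m'] unfolding m'_def by simp
  then obtain \<sigma>' where \<sigma>': "\<forall>a. card {j\<in>{..<n}. \<sigma>' j = a} = m' a"
    using Suc.IH by blast
  have "card {j\<in>{..<Suc n}. (\<sigma>'(n := a1)) j = a} = m a" for a
  proof -
    have "{j\<in>{..<Suc n}. (\<sigma>'(n := a1)) j = a} = {j\<in>{..<n}. \<sigma>' j = a} \<union> (if a1 = a then {n} else {})"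
      by (auto simp: less_Suc_eq)
    then have "card {j\<in>{..<Suc n}. (\<sigma>'(n := a1)) j = a} = card {j\<in>{..<n}. \<sigma>' j = a} + (if a1 = a then 1 else 0)"
      by (auto simp: card_Un_disjoint)
    then show ?thesis
      using \<sigma>' a1 unfolding m'_def by auto
  qed
  then show ?case by blast
qed

definition type_assignment :: "nat \<Rightarrow> ('a::finite \<Rightarrow> nat) \<Rightarrow> nat \<Rightarrow> 'a" where
  "type_assignment n m = (SOME \<sigma>. \<forall>a. card {j\<in>{..<n}. \<sigma> j = a} = m a)"

definition rotated_profile :: "nat \<Rightarrow> ('a::finite \<Rightarrow> nat) \<Rightarrow> nat \<Rightarrow> (nat \<Rightarrow> 'a)" where
  "rotated_profile n m r = restrict (\<lambda>k. type_assignment n m ((k + r) mod n)) {..<n}"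

lemma card_type_assignment:
  "m \<in> weak_compositions n \<Longrightarrow> card {j\<in>{..<n}. type_assignment n m j = a} = m a"
  unfolding type_assignment_def weak_compositions_def using someI_ex[OF ex_assignment_with_counts] by blast

lemma rotated_profile_in_type_profiles: "rotated_profile n m r \<in> type_profiles {..<n}"
  unfolding rotated_profile_def type_profiles_def by auto

text \<open>Over a uniformly random rotation, each population k receives type t with probability m t / n.\<close>
lemma card_rotated_profile_population:
  assumes m: "m \<in> weak_compositions n" and k: "k < n"
  shows "card {r\<in>{..<n}. rotated_profile n m r k = t} = m t"
proof -
  have "{r\<in>{..<n}. rotated_profile n m r k = t} = {r\<in>{..<n}. type_assignment n m ((k + r) mod n) = t}"
    unfolding rotated_profile_def using k by auto
  then show ?thesis
    using card_rotation[where k=k and P="\<lambda>j. type_assignment n m j = t"] card_type_assignment[OF m] k by simp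
qed

lemma card_rotated_profile_type:
  assumes m: "m \<in> weak_compositions n" and n: "0 < n"
  shows "card {k\<in>{..<n}. rotated_profile n m r k = a} = m a"
proof -
  have "{k\<in>{..<n}. rotated_profile n m r k = a} = {k\<in>{..<n}. type_assignment n m ((r + k) mod n) = a}"
    unfolding rotated_profile_def by (auto simp: add.commute)
  then show ?thesis
    using card_rotation[OF n, where k=r and P="\<lambda>j. type_assignment n m j = a"] card_type_assignment[OF m] by simp
qed

section \<open>The obedient equilibrium candidate of a discretised outcome\<close>

lemma sum_card_fibre_mult:
  assumes "finite R" and "finite T" and "f ` R \<subseteq> T"
  shows "(\<Sum>\<tau>\<in>T. real (card {r\<in>R. f r = \<tau>}) * G \<tau>) = (\<Sum>r\<in>R. G (f r))"
proof -
  have "real (card {r\<in>R. f r = \<tau>}) = (\<Sum>r\<in>R. if f r = \<tau> then 1 else 0)" for \<tau>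
    using assms(1) by (simp add: sum.If_cases Int_def)
  then have "(\<Sum>\<tau>\<in>T. real (card {r\<in>R. f r = \<tau>}) * G \<tau>) = (\<Sum>\<tau>\<in>T. \<Sum>r\<in>R. if f r = \<tau> then G \<tau> else 0)"
    by (auto simp: sum_distrib_right intro!: sum.cong)
  also have "\<dots> = (\<Sum>r\<in>R. \<Sum>\<tau>\<in>T. if f r = \<tau> then G \<tau> else 0)"
    by (rule sum.swap)
  also have "\<dots> = (\<Sum>r\<in>R. G (f r))"
    using assms by (intro sum.cong refl) (auto simp: sum.delta)
  finally show ?thesis .
qed

definition grid_distribution :: "nat \<Rightarrow> (('a::finite \<Rightarrow> nat) \<Rightarrow> real) \<Rightarrow> bool" where
  "grid_distribution n v \<longleftrightarrow> (\<forall>m. 0 \<le> v m) \<and> (\<Sum>m\<in>weak_compositions n. v m) = 1"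

text \<open>The type profile is drawn by choosing a type count m with probability v m and then a
  rotation r of the listing uniformly.\<close>
definition grid_weight :: "nat \<Rightarrow> (('a::finite \<Rightarrow> nat) \<Rightarrow> real) \<Rightarrow> (nat \<Rightarrow> 'a) \<Rightarrow> real" where
  "grid_weight n v \<tau> = (\<Sum>m\<in>weak_compositions n. v m * (real (card {r\<in>{..<n}. rotated_profile n m r = \<tau>}) / real n))"

definition grid_info :: "nat \<Rightarrow> ('t \<Rightarrow> ('a::finite \<Rightarrow> nat) \<Rightarrow> real) \<Rightarrow> 't \<Rightarrow> (nat \<Rightarrow> 'a) pmf" where
  "grid_info n w \<theta> = embed_pmf (grid_weight n (w \<theta>))"

lemma sum_grid_weight_mult:
  "(\<Sum>\<tau>\<in>type_profiles {..<n}. grid_weight n v \<tau> * G \<tau>)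
    = (\<Sum>m\<in>weak_compositions n. v m * ((\<Sum>r\<in>{..<n}. G (rotated_profile n m r)) / real n))"
proof -
  have "(\<Sum>\<tau>\<in>type_profiles {..<n}. grid_weight n v \<tau> * G \<tau>)
      = (\<Sum>m\<in>weak_compositions n. v m / real n *
          (\<Sum>\<tau>\<in>type_profiles {..<n}. real (card {r\<in>{..<n}. rotated_profile n m r = \<tau>}) * G \<tau>))"
    unfolding grid_weight_def
    by (simp add: sum_distrib_right sum_distrib_left mult.assoc sum.swap[of _ "weak_compositions n"])
  also have "\<dots> = (\<Sum>m\<in>weak_compositions n. v m / real n * (\<Sum>r\<in>{..<n}. G (rotated_profile n m r)))"
    using finite_type_profiles[of "{..<n}"] rotated_profile_in_type_profiles
    by (subst sum_card_fibre_mult) auto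
  finally show ?thesis
    by simp
qed

lemma grid_weight_eq_0:
  assumes "\<tau> \<notin> type_profiles {..<n}"
  shows "grid_weight n v \<tau> = 0"
proof -
  have "card {r\<in>{..<n}. rotated_profile n m r = \<tau>} = 0" for m
    using assms rotated_profile_in_type_profiles by (metis (mono_tags, lifting) card.empty empty_Collect_eq)
  then show ?thesis
    unfolding grid_weight_def by (intro sum.neutral ballI) (simp only: of_nat_0 div_0 mult_zero_right)
qed

lemma pmf_grid_info:
  assumes n: "0 < n" and v: "grid_distribution n (w \<theta>)"
  shows "pmf (grid_info n w \<theta>) = grid_weight n (w \<theta>)"
proof -
  have nonneg: "0 \<le> grid_weight n (w \<theta>) \<tau>" for \<tau>
    using v unfolding grid_weight_def grid_distribution_def by (intro sum_nonneg mult_nonneg_nonneg) auto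
  have "(\<integral>\<^sup>+\<tau>. ennreal (grid_weight n (w \<theta>) \<tau>) \<partial>count_space UNIV)
      = (\<Sum>\<tau>\<in>type_profiles {..<n}. ennreal (grid_weight n (w \<theta>) \<tau>))"
    by (rule nn_integral_count_space'[OF finite_type_profiles]) (auto simp: grid_weight_eq_0)
  also have "\<dots> = ennreal (\<Sum>\<tau>\<in>type_profiles {..<n}. grid_weight n (w \<theta>) \<tau>)"
    by (rule sum_ennreal) (rule nonneg)
  also have "\<dots> = 1"
    using sum_grid_weight_mult[of n "w \<theta>" "\<lambda>_. 1"] v n unfolding grid_distribution_def by simp
  finally show ?thesis
    unfolding grid_info_def by (intro ext pmf_embed_pmf nonneg)
qed

lemma direct_info_grid_info:
  assumes n: "0 < n" and w: "\<forall>\<theta>. grid_distribution n (w \<theta>)"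
  shows "direct_info {..<n} (\<lambda>_. 1 / real n) (grid_info n w)"
proof -
  have "set_pmf (grid_info n w \<theta>) \<subseteq> type_profiles {..<n}" for \<theta>
    using pmf_grid_info[where w=w and \<theta>=\<theta>, OF n] w grid_weight_eq_0 by (auto simp: set_pmf_eq)
  then show ?thesis
    unfolding direct_info_def using n by auto
qed

lemma sum_pmf_grid_info_mult:
  assumes n: "0 < n" and w: "grid_distribution n (w \<theta>)"
  shows "(\<Sum>\<tau>\<in>type_profiles {..<n}. pmf (grid_info n w \<theta>) \<tau> * G \<tau>)
    = (\<Sum>m\<in>weak_compositions n. w \<theta> m * ((\<Sum>r\<in>{..<n}. G (rotated_profile n m r)) / real n))"
  unfolding pmf_grid_info[where w=w and \<theta>=\<theta>, OF n w] by (rule sum_grid_weight_mult)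

definition obedient_profile :: "nat \<Rightarrow> nat \<Rightarrow> 'a::finite \<Rightarrow> real ^ 'a" where
  "obedient_profile n k t = (if k < n then (1 / real n) *\<^sub>R axis t 1 else 0)"

lemma interim_profile_obedient: "interim_profile {..<n} (\<lambda>_. 1 / real n) (obedient_profile n)"
  unfolding interim_profile_def obedient_profile_def simplex_gamma_def
  by (auto simp: axis_def sum_divide_distrib[symmetric])

lemma total_flow_obedient_rotated:
  assumes m: "m \<in> weak_compositions n" and n: "0 < n"
  shows "total_flow {..<n} (obedient_profile n) (rotated_profile n m r) = grid_point n m"
proof -
  have "total_flow {..<n} (obedient_profile n) (rotated_profile n m r) $ a
      = (\<Sum>k\<in>{..<n}. if rotated_profile n m r k = a then 1 / real n else 0)" for a
    unfolding total_flow_component obedient_profile_def by (intro sum.cong) (auto simp: axis_def)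
  also have "\<dots> a = real (card {k\<in>{..<n}. rotated_profile n m r k = a}) / real n" for a
    by (simp add: sum.If_cases Int_def)
  finally show ?thesis
    using card_rotated_profile_type[OF m n] unfolding grid_point_def by (simp add: vec_eq_iff)
qed

lemma expectation_BW_outcome_grid_info:
  assumes n: "0 < n" and w: "\<forall>\<theta>. grid_distribution n (w \<theta>)"
  shows "measure_pmf.expectation (BW_outcome {..<n} (grid_info n w) (obedient_profile n) \<theta>) f
    = (\<Sum>m\<in>weak_compositions n. w \<theta> m * f (grid_point n m))"
  unfolding expectation_BW_outcome[OF direct_info_grid_info[OF n w]] sum_pmf_grid_info_mult[OF n w[rule_format]]
  using n by (intro sum.cong refl) (simp add: total_flow_obedient_rotated)

text \<open>A discrete analogue of the two sides of the BCWE inequalities.\<close>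
definition obedient_cost :: "('t::finite \<Rightarrow> real) \<Rightarrow> ('a::finite \<Rightarrow> real ^ 'a \<Rightarrow> 't \<Rightarrow> real) \<Rightarrow> nat
    \<Rightarrow> ('t \<Rightarrow> ('a \<Rightarrow> nat) \<Rightarrow> real) \<Rightarrow> 'a \<Rightarrow> 'a \<Rightarrow> real" where
  "obedient_cost p c n w t b = (\<Sum>\<theta>\<in>UNIV. p \<theta> * (\<Sum>m\<in>weak_compositions n. w \<theta> m * (grid_point n m $ t * c b (grid_point n m) \<theta>)))"

lemma interim_cost_grid_info:
  fixes w :: "'t::finite \<Rightarrow> ('a::finite \<Rightarrow> nat) \<Rightarrow> real"
  assumes n: "0 < n" and w: "\<forall>\<theta>. grid_distribution n (w \<theta>)" and k: "k < n"
  shows "interim_cost p c {..<n} (grid_info n w) (obedient_profile n) k t b = obedient_cost p c n w t b"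
proof -
  have "(\<Sum>\<tau>\<in>{\<tau>\<in>type_profiles {..<n}. \<tau> k = t}. p \<theta> * pmf (grid_info n w \<theta>) \<tau> * c b (total_flow {..<n} (obedient_profile n) \<tau>) \<theta>)
      = p \<theta> * (\<Sum>m\<in>weak_compositions n. w \<theta> m * (grid_point n m $ t * c b (grid_point n m) \<theta>))" for \<theta>
  proof -
    have "(\<Sum>\<tau>\<in>{\<tau>\<in>type_profiles {..<n}. \<tau> k = t}. p \<theta> * pmf (grid_info n w \<theta>) \<tau> * c b (total_flow {..<n} (obedient_profile n) \<tau>) \<theta>)
        = p \<theta> * (\<Sum>\<tau>\<in>type_profiles {..<n}. pmf (grid_info n w \<theta>) \<tau> *
            (if \<tau> k = t then c b (total_flow {..<n} (obedient_profile n) \<tau>) \<theta> else 0))"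
      by (subst sum.inter_filter[OF finite_type_profiles]) (auto simp: sum_distrib_left intro!: sum.cong)
    also have "\<dots> = p \<theta> * (\<Sum>m\<in>weak_compositions n. w \<theta> m * ((\<Sum>r\<in>{..<n}.
        if rotated_profile n m r k = t then c b (total_flow {..<n} (obedient_profile n) (rotated_profile n m r)) \<theta> else 0) / real n))"
      by (subst sum_pmf_grid_info_mult[OF n w[rule_format]]) rule
    also have "\<dots> = p \<theta> * (\<Sum>m\<in>weak_compositions n. w \<theta> m * (grid_point n m $ t * c b (grid_point n m) \<theta>))"
    proof (intro arg_cong[where f="\<lambda>x. p \<theta> * x"] sum.cong refl)
      fix m :: "'a \<Rightarrow> nat" assume m: "m \<in> weak_compositions n"
      have "(\<Sum>r\<in>{..<n}. if rotated_profile n m r k = t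
            then c b (total_flow {..<n} (obedient_profile n) (rotated_profile n m r)) \<theta> else 0)
          = real (card {r\<in>{..<n}. rotated_profile n m r k = t}) * c b (grid_point n m) \<theta>"
        by (simp add: total_flow_obedient_rotated[OF m n] sum.If_cases Int_def)
      then show "w \<theta> m * ((\<Sum>r\<in>{..<n}. if rotated_profile n m r k = t
            then c b (total_flow {..<n} (obedient_profile n) (rotated_profile n m r)) \<theta> else 0) / real n)
          = w \<theta> m * (grid_point n m $ t * c b (grid_point n m) \<theta>)"
        using card_rotated_profile_population[OF m k] unfolding grid_point_def by simp
    qed
    finally show ?thesis .
  qed
  then show ?thesis
    unfolding interim_cost_def obedient_cost_def by simp
qed

lemma regret_grid_info:
  fixes w :: "'t::finite \<Rightarrow> ('a::finite \<Rightarrow> nat) \<Rightarrow> real"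
  assumes n: "0 < n" and w: "\<forall>\<theta>. grid_distribution n (w \<theta>)"
  shows "regret p c {..<n} (\<lambda>_. 1 / real n) (grid_info n w) (obedient_profile n)
    = (\<Sum>t\<in>UNIV. obedient_cost p c n w t t - Min (range (obedient_cost p c n w t)))"
proof -
  have "regret p c {..<n} (\<lambda>_. 1 / real n) (grid_info n w) (obedient_profile n)
      = (\<Sum>k\<in>{..<n}. \<Sum>t\<in>UNIV. (obedient_cost p c n w t t - Min (range (obedient_cost p c n w t))) / real n)"
    unfolding regret_def
  proof (intro sum.cong refl)
    fix k t assume k: "k \<in> {..<n}"
    have IC: "interim_cost p c {..<n} (grid_info n w) (obedient_profile n) k t = obedient_cost p c n w t"
      using interim_cost_grid_info[OF n w] k by auto
    have "(\<Sum>a\<in>UNIV. obedient_profile n k t $ a * obedient_cost p c n w t a)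
        = (\<Sum>a\<in>UNIV. if a = t then obedient_cost p c n w t t / real n else 0)"
      using k by (intro sum.cong) (auto simp: obedient_profile_def axis_def)
    then show "(\<Sum>a\<in>UNIV. obedient_profile n k t $ a * interim_cost p c {..<n} (grid_info n w) (obedient_profile n) k t a)
        - 1 / real n * Min (range (interim_cost p c {..<n} (grid_info n w) (obedient_profile n) k t))
        = (obedient_cost p c n w t t - Min (range (obedient_cost p c n w t))) / real n"
      unfolding IC by (simp add: diff_divide_distrib)
  qed
  also have "\<dots> = (\<Sum>t\<in>UNIV. obedient_cost p c n w t t - Min (range (obedient_cost p c n w t)))"
    using n by (simp add: sum.swap[of _ "{..<n}"] sum_divide_distrib[symmetric])
  finally show ?thesis .
qed

lemma grid_distribution_level_set_measures:
  assumes P: "prob_space M" and S: "sets M = sets (restrict_space borel (simplexY :: (real ^ 'a::finite) set))"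
  shows "grid_distribution n (\<lambda>m. measure M {y \<in> space M. grid_count n a0 y = m})"
proof -
  interpret prob_space M by (rule P)
  show ?thesis
    using integral_grid_discretisation[OF P S, of "\<lambda>_. 1" n a0] unfolding grid_distribution_def
    by (simp add: prob_space)
qed

lemma ex_grid_mesh:
  fixes F :: "'i::finite \<Rightarrow> real ^ 'a::finite \<Rightarrow> real"
  assumes cont: "\<And>i. continuous_on simplexY (F i)" and \<zeta>: "0 < \<zeta>"
  shows "\<exists>N>0. \<forall>n\<ge>N. \<forall>i. \<forall>y\<in>simplexY. \<bar>F i (grid_point n (grid_count n a0 y)) - F i y\<bar> \<le> \<zeta>"
proof -
  obtain \<delta> where \<delta>: "0 < \<delta>" "\<forall>i. \<forall>y\<in>simplexY. \<forall>y'\<in>simplexY. dist y y' < \<delta> \<longrightarrow> \<bar>F i y - F i y'\<bar> \<le> \<zeta>"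
    using uniformly_continuous_family_finite[where S=simplexY and F=F, OF compact_simplex_gamma cont \<zeta>]
    by blast
  define N where "N = nat \<lceil>real CARD('a) * real CARD('a) / \<delta>\<rceil> + 1"
  have "\<bar>F i (grid_point n (grid_count n a0 y)) - F i y\<bar> \<le> \<zeta>" if n: "N \<le> n" and y: "y \<in> simplexY" for n i y
  proof -
    have n0: "0 < n"
      using n unfolding N_def by simp
    have "real CARD('a) * real CARD('a) / \<delta> < real n"
      using n unfolding N_def by linarith
    then have "real CARD('a) * real CARD('a) / real n < \<delta>"
      using \<delta>(1) n0 by (simp add: field_simps)
    then have "dist (grid_point n (grid_count n a0 y)) y < \<delta>"
      using dist_grid_point_grid_count_le[OF y n0, of a0] by linarith
    moreover have "grid_point n (grid_count n a0 y) \<in> simplexY"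
      by (rule grid_point_in_simplex[OF grid_count_in_weak_compositions[OF y] n0])
    ultimately show ?thesis
      using \<delta>(2) y by blast
  qed
  moreover have "0 < N"
    unfolding N_def by simp
  ultimately show ?thesis
    by blast
qed

definition BCWE_cost :: "('t::finite \<Rightarrow> real) \<Rightarrow> ('a::finite \<Rightarrow> real ^ 'a \<Rightarrow> 't \<Rightarrow> real)
    \<Rightarrow> ('t \<Rightarrow> (real ^ 'a) measure) \<Rightarrow> 'a \<Rightarrow> 'a \<Rightarrow> real" where
  "BCWE_cost p c \<mu> t b = (\<Sum>\<theta>\<in>UNIV. p \<theta> * (\<integral>y. y $ t * c b y \<theta> \<partial>\<mu> \<theta>))"

lemma regret_grid_info_le:
  fixes w :: "'t::finite \<Rightarrow> ('a::finite \<Rightarrow> nat) \<Rightarrow> real"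
  assumes n: "0 < n" and w: "\<forall>\<theta>. grid_distribution n (w \<theta>)" and eq: "BCWE p c \<mu>"
    and close: "\<And>t b. \<bar>obedient_cost p c n w t b - BCWE_cost p c \<mu> t b\<bar> \<le> \<zeta>"
  shows "regret p c {..<n} (\<lambda>_. 1 / real n) (grid_info n w) (obedient_profile n) \<le> 2 * real CARD('a) * \<zeta>"
proof -
  have "obedient_cost p c n w t t - Min (range (obedient_cost p c n w t)) \<le> 2 * \<zeta>" for t
  proof -
    have "Min (range (obedient_cost p c n w t)) \<in> range (obedient_cost p c n w t)"
      by (rule Min_in) auto
    then obtain b where b: "obedient_cost p c n w t b = Min (range (obedient_cost p c n w t))"
      by (metis imageE)
    have "BCWE_cost p c \<mu> t t \<le> BCWE_cost p c \<mu> t b"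
      using eq unfolding BCWE_def BCWE_cost_def by auto
    then show ?thesis
      using close[of t t] close[of t b] b by linarith
  qed
  then have "regret p c {..<n} (\<lambda>_. 1 / real n) (grid_info n w) (obedient_profile n) \<le> (\<Sum>t\<in>(UNIV::'a set). 2 * \<zeta>)"
    unfolding regret_grid_info[OF n w] by (intro sum_mono)
  then show ?thesis
    by simp
qed

lemma obedient_cost_close:
  fixes p :: "'t::finite \<Rightarrow> real" and c :: "'a::finite \<Rightarrow> real ^ 'a \<Rightarrow> 't \<Rightarrow> real"
  assumes game: "basic_game p c" and eq: "BCWE p c \<mu>"
    and w: "\<And>\<theta> m. w \<theta> m = measure (\<mu> \<theta>) {y \<in> space (\<mu> \<theta>). grid_count n a0 y = m}"
    and close: "\<And>\<theta> y. y \<in> simplexY \<Longrightarrow>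
      \<bar>grid_point n (grid_count n a0 y) $ t * c b (grid_point n (grid_count n a0 y)) \<theta> - y $ t * c b y \<theta>\<bar> \<le> \<zeta>"
  shows "\<bar>obedient_cost p c n w t b - BCWE_cost p c \<mu> t b\<bar> \<le> \<zeta>"
proof -
  have P: "prob_space (\<mu> \<theta>)" and S: "sets (\<mu> \<theta>) = sets (restrict_space borel simplexY)" for \<theta>
    using eq unfolding BCWE_def is_outcome_def by auto
  have p: "\<And>\<theta>. 0 < p \<theta>" "(\<Sum>\<theta>\<in>UNIV. p \<theta>) = 1"
    using game unfolding basic_game_def by auto
  have "\<bar>(\<Sum>m\<in>weak_compositions n. w \<theta> m * (grid_point n m $ t * c b (grid_point n m) \<theta>))
      - (\<integral>y. y $ t * c b y \<theta> \<partial>\<mu> \<theta>)\<bar> \<le> \<zeta>" for \<theta>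
    unfolding w using game close unfolding basic_game_def
    by (intro sum_grid_discretisation_close[OF P S]) (auto intro!: continuous_intros)
  then have "\<bar>p \<theta> * ((\<Sum>m\<in>weak_compositions n. w \<theta> m * (grid_point n m $ t * c b (grid_point n m) \<theta>))
      - (\<integral>y. y $ t * c b y \<theta> \<partial>\<mu> \<theta>))\<bar> \<le> p \<theta> * \<zeta>" for \<theta>
    using p(1)[of \<theta>] by (simp add: abs_mult mult_left_mono)
  then have "\<bar>obedient_cost p c n w t b - BCWE_cost p c \<mu> t b\<bar> \<le> (\<Sum>\<theta>\<in>UNIV. p \<theta> * \<zeta>)"
    unfolding obedient_cost_def BCWE_cost_def sum_subtractf[symmetric] right_diff_distrib[symmetric]
    by (intro order_trans[OF sum_abs] sum_mono)
  also have "\<dots> = \<zeta>"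
    using p(2) by (simp add: sum_distrib_right[symmetric])
  finally show ?thesis .
qed

lemma obedient_approximates_BCWE:
  fixes p :: "'t::finite \<Rightarrow> real" and c :: "'a::finite \<Rightarrow> real ^ 'a \<Rightarrow> 't \<Rightarrow> real"
    and \<mu> :: "'t \<Rightarrow> (real ^ 'a) measure" and \<psi> :: "real ^ 'a \<Rightarrow> 't \<Rightarrow> real"
  assumes game: "basic_game p c" and eq: "BCWE p c \<mu>"
    and \<psi>: "\<forall>\<theta>. continuous_on simplexY (\<lambda>y. \<psi> y \<theta>)" and r: "0 < r" and z: "0 < z"
  shows "\<exists>n>0. \<exists>w. (\<forall>\<theta>. grid_distribution n (w \<theta>)) \<and>
     regret p c {..<n} (\<lambda>_. 1 / real n) (grid_info n w) (obedient_profile n) \<le> r \<and>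
     (\<forall>\<theta>. \<bar>(\<integral>y. \<psi> y \<theta> \<partial>\<mu> \<theta>)
        - measure_pmf.expectation (BW_outcome {..<n} (grid_info n w) (obedient_profile n) \<theta>) (\<lambda>y. \<psi> y \<theta>)\<bar> \<le> z)"
proof -
  have P: "prob_space (\<mu> \<theta>)" and S: "sets (\<mu> \<theta>) = sets (restrict_space borel simplexY)" for \<theta>
    using eq unfolding BCWE_def is_outcome_def by auto
  define \<zeta> where "\<zeta> = r / (2 * real CARD('a))"
  have \<zeta>: "0 < \<zeta>"
    unfolding \<zeta>_def using r by simp
  \<comment> \<open>The rounding deficit may go to any action; undefined serves as a fixed one.\<close>
  obtain N1 where N1: "\<forall>n\<ge>N1. \<forall>\<theta>. \<forall>y\<in>simplexY. \<bar>\<psi> (grid_point n (grid_count n undefined y)) \<theta> - \<psi> y \<theta>\<bar> \<le> z"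
    using ex_grid_mesh[of "\<lambda>\<theta> y. \<psi> y \<theta>", OF _ z] \<psi> by blast
  define F where "F i y = y $ fst (snd i) * c (snd (snd i)) y (fst i)" for i :: "'t \<times> 'a \<times> 'a" and y
  have "continuous_on simplexY (F i)" for i
    using game unfolding basic_game_def F_def by (auto intro!: continuous_intros)
  then obtain N2 where N2: "0 < N2"
    "\<forall>n\<ge>N2. \<forall>i. \<forall>y\<in>simplexY. \<bar>F i (grid_point n (grid_count n undefined y)) - F i y\<bar> \<le> \<zeta>"
    using ex_grid_mesh[of F, OF _ \<zeta>] by blast
  define n where "n = max N1 N2"
  have n: "0 < n"
    unfolding n_def using N2(1) by simp
  have \<psi>_close: "\<bar>\<psi> (grid_point n (grid_count n undefined y)) \<theta> - \<psi> y \<theta>\<bar> \<le> z"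
    if "y \<in> simplexY" for \<theta> y
    using N1 that unfolding n_def by simp
  have cost_close: "\<bar>grid_point n (grid_count n undefined y) $ t * c b (grid_point n (grid_count n undefined y)) \<theta>
      - y $ t * c b y \<theta>\<bar> \<le> \<zeta>" if "y \<in> simplexY" for \<theta> t b y
  proof -
    have "\<forall>i. \<forall>y\<in>simplexY. \<bar>F i (grid_point n (grid_count n undefined y)) - F i y\<bar> \<le> \<zeta>"
      using N2(2) unfolding n_def by simp
    then have "\<bar>F (\<theta>, t, b) (grid_point n (grid_count n undefined y)) - F (\<theta>, t, b) y\<bar> \<le> \<zeta>"
      using that by blast
    then show ?thesis
      unfolding F_def by simp
  qed
  define w where "w \<theta> m = measure (\<mu> \<theta>) {y \<in> space (\<mu> \<theta>). grid_count n undefined y = m}" for \<theta> m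
  have w: "\<forall>\<theta>. grid_distribution n (w \<theta>)"
    unfolding w_def using grid_distribution_level_set_measures[OF P S] by blast
  have "\<bar>(\<integral>y. \<psi> y \<theta> \<partial>\<mu> \<theta>)
      - measure_pmf.expectation (BW_outcome {..<n} (grid_info n w) (obedient_profile n) \<theta>) (\<lambda>y. \<psi> y \<theta>)\<bar> \<le> z" for \<theta>
    unfolding expectation_BW_outcome_grid_info[OF n w] w_def using \<psi> \<psi>_close
    by (subst abs_minus_commute) (intro sum_grid_discretisation_close[OF P S]; simp)
  moreover have "regret p c {..<n} (\<lambda>_. 1 / real n) (grid_info n w) (obedient_profile n) \<le> 2 * real CARD('a) * \<zeta>"
    by (intro regret_grid_info_le[OF n w eq] obedient_cost_close[OF game eq w_def] cost_close)
  ultimately show ?thesis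
    using n w unfolding \<zeta>_def by auto
qed

section \<open>Robust implementation of the BCWE\<close>

lemma ex_bound_continuous_family:
  fixes F :: "'i::finite \<Rightarrow> real ^ 'a::finite \<Rightarrow> real"
  assumes "\<And>i. continuous_on simplexY (F i)"
  shows "\<exists>M\<ge>0. \<forall>i. \<forall>y\<in>simplexY. \<bar>F i y\<bar> \<le> M"
proof -
  have "\<exists>B. \<forall>y\<in>simplexY. \<bar>F i y\<bar> \<le> B" for i
    using compact_imp_bounded[OF compact_continuous_image[OF assms compact_simplex_gamma]]
    unfolding bounded_iff by auto
  then obtain B where B: "\<And>i. \<forall>y\<in>simplexY. \<bar>F i y\<bar> \<le> B i"
    by metis
  have "\<bar>F i y\<bar> \<le> (\<Sum>i\<in>UNIV. \<bar>B i\<bar>)" if "y \<in> simplexY" for i y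
  proof -
    have "\<bar>F i y\<bar> \<le> \<bar>B i\<bar>"
      using B[of i] that by force
    also have "\<dots> \<le> (\<Sum>i\<in>UNIV. \<bar>B i\<bar>)"
      by (rule member_le_sum) auto
    finally show ?thesis .
  qed
  then show ?thesis
    by (intro exI[of _ "\<Sum>i\<in>UNIV. \<bar>B i\<bar>"]) (auto intro: sum_nonneg)
qed

lemma regret_stability:
  fixes c :: "'a::finite \<Rightarrow> real ^ 'a \<Rightarrow> 't::finite \<Rightarrow> real" and \<psi> :: "real ^ 'a \<Rightarrow> 't \<Rightarrow> real"
  assumes game: "basic_game p c" and pot: "is_potential c \<Phi>" and sc: "\<forall>\<theta>. strictly_convex_on simplexY (\<Phi> \<theta>)"
    and \<psi>: "\<forall>\<theta>. continuous_on simplexY (\<lambda>y. \<psi> y \<theta>)" and e: "0 < e"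
  shows "\<exists>r>0. \<forall>K gam (tp :: 't \<Rightarrow> (nat \<Rightarrow> 'a) pmf) yh ys \<theta>.
    direct_info K gam tp \<and> interim_profile K gam yh \<and> regret p c K gam tp yh \<le> r \<and> BW_eps_eq p c K gam tp 0 ys \<longrightarrow>
    \<bar>measure_pmf.expectation (BW_outcome K tp yh \<theta>) (\<lambda>y. \<psi> y \<theta>)
      - measure_pmf.expectation (BW_outcome K tp ys \<theta>) (\<lambda>y. \<psi> y \<theta>)\<bar> \<le> e"
proof -
  obtain M where M: "0 \<le> M" "\<forall>\<theta>. \<forall>y\<in>simplexY. \<bar>\<psi> y \<theta>\<bar> \<le> M"
    using ex_bound_continuous_family[of "\<lambda>\<theta> y. \<psi> y \<theta>"] \<psi> by blast
  obtain \<eta> where \<eta>: "0 < \<eta>" "\<forall>\<theta>. \<forall>y\<in>simplexY. \<forall>y'\<in>simplexY. dist y y' < \<eta> \<longrightarrow> \<bar>\<psi> y \<theta> - \<psi> y' \<theta>\<bar> \<le> e / 2"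
    using uniformly_continuous_family_finite[of simplexY "\<lambda>\<theta> y. \<psi> y \<theta>" "e / 2"] \<psi> e compact_simplex_gamma
    by auto
  obtain \<kappa> where \<kappa>: "0 < \<kappa>" "\<forall>\<theta>. \<forall>y\<in>simplexY. \<forall>y'\<in>simplexY. \<eta> \<le> dist y y' \<longrightarrow> \<kappa> \<le> cost_gap c \<theta> y y'"
    using cost_gap_uniform_margin[OF game pot sc \<eta>(1)] by blast
  have p: "\<And>\<theta>. 0 < p \<theta>"
    using game unfolding basic_game_def by auto
  define pmin where "pmin = Min (range p)"
  have pmin: "0 < pmin" "\<And>\<theta>. pmin \<le> p \<theta>"
    unfolding pmin_def using Min_range_pos[of 0 p] p by auto
  define r where "r = e * pmin * \<kappa> / (4 * (M + 1))"
  have r: "0 < r"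
    unfolding r_def using e pmin \<kappa>(1) M(1) by simp
  have bound: "2 * M * r / (p \<theta> * \<kappa>) \<le> e / 2" for \<theta>
  proof -
    have "2 * M * r = e * pmin * \<kappa> / 2 * (M / (M + 1))"
      unfolding r_def using M(1) by (simp add: field_simps)
    also have "\<dots> \<le> e * pmin * \<kappa> / 2"
      using M(1) e pmin(1) \<kappa>(1) by (intro mult_left_le) auto
    also have "\<dots> \<le> e * p \<theta> * \<kappa> / 2"
      using pmin(2)[of \<theta>] e \<kappa>(1) by (intro divide_right_mono mult_right_mono mult_left_mono) auto
    finally show ?thesis
      using p[of \<theta>] \<kappa>(1) by (simp add: divide_le_eq)
  qed
  have "\<bar>measure_pmf.expectation (BW_outcome K tp yh \<theta>) (\<lambda>y. \<psi> y \<theta>)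
      - measure_pmf.expectation (BW_outcome K tp ys \<theta>) (\<lambda>y. \<psi> y \<theta>)\<bar> \<le> e"
    if "direct_info K gam tp" "interim_profile K gam yh" "regret p c K gam tp yh \<le> r" "BW_eps_eq p c K gam tp 0 ys"
    for K gam and tp :: "'t \<Rightarrow> (nat \<Rightarrow> 'a) pmf" and yh ys \<theta>
  proof -
    have "\<bar>measure_pmf.expectation (BW_outcome K tp yh \<theta>) (\<lambda>y. \<psi> y \<theta>)
        - measure_pmf.expectation (BW_outcome K tp ys \<theta>) (\<lambda>y. \<psi> y \<theta>)\<bar>
        \<le> e / 2 + 2 * M * regret p c K gam tp yh / (p \<theta> * \<kappa>)"
      by (rule BW_outcome_expectation_close[where \<eta>=\<eta>, OF game pot sc that(1,2,4)]) (use M \<eta> \<kappa> e in auto)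
    also have "2 * M * regret p c K gam tp yh / (p \<theta> * \<kappa>) \<le> 2 * M * r / (p \<theta> * \<kappa>)"
      using that(3) M(1) p[of \<theta>] \<kappa>(1) by (intro divide_right_mono mult_left_mono) auto
    finally show ?thesis
      using bound[of \<theta>] by linarith
  qed
  with r show ?thesis
    by blast
qed

text \<open>The regret bound r of the stability lemma is fixed before the grid, so that every
  r-equilibrium is compared with the exact equilibrium and, through it, with the obedient profile.\<close>
lemma grid_implementation:
  fixes p :: "'t::finite \<Rightarrow> real" and c :: "'a::finite \<Rightarrow> real ^ 'a \<Rightarrow> 't \<Rightarrow> real"
    and \<mu> :: "'t \<Rightarrow> (real ^ 'a) measure" and \<psi> :: "real ^ 'a \<Rightarrow> 't \<Rightarrow> real"
  assumes game: "basic_game p c" and pot: "is_potential c \<Phi>" and sc: "\<forall>\<theta>. strictly_convex_on simplexY (\<Phi> \<theta>)"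
    and eq: "BCWE p c \<mu>" and \<psi>: "\<forall>\<theta>. continuous_on simplexY (\<lambda>y. \<psi> y \<theta>)" and \<epsilon>: "0 < \<epsilon>"
  shows "\<exists>r>0. \<exists>n>0. \<exists>w. (\<forall>\<theta>. grid_distribution n (w \<theta>)) \<and>
    (\<forall>yh. BW_eps_eq p c {..<n} (\<lambda>_. 1 / real n) (grid_info n w) r yh \<longrightarrow>
      (\<forall>\<theta>. \<bar>(\<integral>y. \<psi> y \<theta> \<partial>\<mu> \<theta>)
        - measure_pmf.expectation (BW_outcome {..<n} (grid_info n w) yh \<theta>) (\<lambda>y. \<psi> y \<theta>)\<bar> \<le> \<epsilon>))"
proof -
  obtain r where r: "0 < r" and stable: "\<forall>K gam (tp :: 't \<Rightarrow> (nat \<Rightarrow> 'a) pmf) yh ys \<theta>.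
      direct_info K gam tp \<and> interim_profile K gam yh \<and> regret p c K gam tp yh \<le> r \<and> BW_eps_eq p c K gam tp 0 ys \<longrightarrow>
      \<bar>measure_pmf.expectation (BW_outcome K tp yh \<theta>) (\<lambda>y. \<psi> y \<theta>)
        - measure_pmf.expectation (BW_outcome K tp ys \<theta>) (\<lambda>y. \<psi> y \<theta>)\<bar> \<le> \<epsilon> / 3"
    using regret_stability[OF game pot sc \<psi>, of "\<epsilon> / 3"] \<epsilon> by auto
  obtain n w where n: "0 < n" and w: "\<forall>\<theta>. grid_distribution n (w \<theta>)"
    and ob: "regret p c {..<n} (\<lambda>_. 1 / real n) (grid_info n w) (obedient_profile n) \<le> r"
    and approx: "\<forall>\<theta>. \<bar>(\<integral>y. \<psi> y \<theta> \<partial>\<mu> \<theta>)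
      - measure_pmf.expectation (BW_outcome {..<n} (grid_info n w) (obedient_profile n) \<theta>) (\<lambda>y. \<psi> y \<theta>)\<bar> \<le> \<epsilon> / 3"
    using obedient_approximates_BCWE[OF game eq \<psi> r, of "\<epsilon> / 3"] \<epsilon> by auto
  have info: "direct_info {..<n} (\<lambda>_. 1 / real n) (grid_info n w)"
    by (rule direct_info_grid_info[OF n w])
  obtain ys where ys: "BW_eps_eq p c {..<n} (\<lambda>_. 1 / real n) (grid_info n w) 0 ys"
    using BW_eq_exists[OF pot info] by blast
  have "\<bar>(\<integral>y. \<psi> y \<theta> \<partial>\<mu> \<theta>)
      - measure_pmf.expectation (BW_outcome {..<n} (grid_info n w) yh \<theta>) (\<lambda>y. \<psi> y \<theta>)\<bar> \<le> \<epsilon>"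
    if eq_r: "BW_eps_eq p c {..<n} (\<lambda>_. 1 / real n) (grid_info n w) r yh" for yh \<theta>
  proof -
    have "interim_profile {..<n} (\<lambda>_. 1 / real n) yh"
      using eq_r unfolding BW_eps_eq_def by auto
    moreover have "regret p c {..<n} (\<lambda>_. 1 / real n) (grid_info n w) yh \<le> r"
      by (rule regret_le_if_BW_eps_eq[OF game info eq_r])
    ultimately have "\<bar>measure_pmf.expectation (BW_outcome {..<n} (grid_info n w) yh \<theta>) (\<lambda>y. \<psi> y \<theta>)
        - measure_pmf.expectation (BW_outcome {..<n} (grid_info n w) ys \<theta>) (\<lambda>y. \<psi> y \<theta>)\<bar> \<le> \<epsilon> / 3"
      using stable info ys by blast
    moreover have "\<bar>measure_pmf.expectation (BW_outcome {..<n} (grid_info n w) (obedient_profile n) \<theta>) (\<lambda>y. \<psi> y \<theta>)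
        - measure_pmf.expectation (BW_outcome {..<n} (grid_info n w) ys \<theta>) (\<lambda>y. \<psi> y \<theta>)\<bar> \<le> \<epsilon> / 3"
      using stable info interim_profile_obedient ob ys by blast
    ultimately show ?thesis
      using approx[rule_format, of \<theta>] by linarith
  qed
  with r n w show ?thesis
    by blast
qed

theorem mainTheorem4:
  fixes p :: "'t::finite \<Rightarrow> real"
    and c :: "'a::finite \<Rightarrow> real ^ 'a \<Rightarrow> 't \<Rightarrow> real"
    and \<Phi> :: "'t \<Rightarrow> real ^ 'a \<Rightarrow> real"
    and \<mu> :: "'t \<Rightarrow> (real ^ 'a) measure"
    and \<psi> :: "real ^ 'a \<Rightarrow> 't \<Rightarrow> real"
    and \<epsilon> :: real
  assumes game: "basic_game p c"
    and pot: "is_potential c \<Phi>"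
    and sconv: "\<forall>\<theta>. strictly_convex_on simplexY (\<Phi> \<theta>)"
    and eq: "BCWE p c \<mu>"
    and psi_cont: "\<forall>\<theta>. continuous_on simplexY (\<lambda>y. \<psi> y \<theta>)"
    and eps: "\<epsilon> > 0"
  shows "\<exists>\<alpha>>0. \<exists>(K :: nat set) (gam :: nat \<Rightarrow> real) (tp :: 't \<Rightarrow> (nat \<Rightarrow> 'a) pmf).
           direct_info K gam tp \<and>
           (\<exists>yh. BW_eps_eq p c K gam tp 0 yh) \<and>
           (\<forall>yh1 yh2. BW_eps_eq p c K gam tp 0 yh1 \<and> BW_eps_eq p c K gam tp 0 yh2 \<longrightarrow>
               BW_outcome K tp yh1 = BW_outcome K tp yh2) \<and>
           (\<forall>yh. BW_eps_eq p c K gam tp \<alpha> yh \<longrightarrow>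
              (\<forall>\<theta>. \<bar>(\<integral>y. \<psi> y \<theta> \<partial>\<mu> \<theta>)
                     - measure_pmf.expectation (BW_outcome K tp yh \<theta>) (\<lambda>y. \<psi> y \<theta>)\<bar> \<le> \<epsilon>))"
proof -
  obtain r n w where r: "0 < r" and n: "0 < n" and w: "\<forall>\<theta>. grid_distribution n (w \<theta>)"
    and close: "\<forall>yh. BW_eps_eq p c {..<n} (\<lambda>_. 1 / real n) (grid_info n w) r yh \<longrightarrow>
      (\<forall>\<theta>. \<bar>(\<integral>y. \<psi> y \<theta> \<partial>\<mu> \<theta>)
        - measure_pmf.expectation (BW_outcome {..<n} (grid_info n w) yh \<theta>) (\<lambda>y. \<psi> y \<theta>)\<bar> \<le> \<epsilon>)"
    using grid_implementation[OF game pot sconv eq psi_cont eps] by blast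
  have info: "direct_info {..<n} (\<lambda>_. 1 / real n) (grid_info n w)"
    by (rule direct_info_grid_info[OF n w])
  show ?thesis
  proof (intro exI[of _ r] conjI r exI[of _ "{..<n}"] exI[of _ "\<lambda>_. 1 / real n"] exI[of _ "grid_info n w"]
      info close)
    show "\<exists>yh. BW_eps_eq p c {..<n} (\<lambda>_. 1 / real n) (grid_info n w) 0 yh"
      by (rule BW_eq_exists[OF pot info])
    show "\<forall>yh1 yh2. BW_eps_eq p c {..<n} (\<lambda>_. 1 / real n) (grid_info n w) 0 yh1
        \<and> BW_eps_eq p c {..<n} (\<lambda>_. 1 / real n) (grid_info n w) 0 yh2
        \<longrightarrow> BW_outcome {..<n} (grid_info n w) yh1 = BW_outcome {..<n} (grid_info n w) yh2"
      using BW_outcome_unique[OF game pot sconv info] by blast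
  qed
qed

end
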